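(* Let $m\in\mathbb{R}$, $A\in\mathbb{C}^{2\times2}$, $v\in L^1(\mathbb{R};\mathbb{R})\cap L^2(\mathbb{R};\mathbb{R})$ with $\int_{\mathbb{R}}v=1$, and $\varepsilon>0$. Then $z\in\mathbb{C}\setminus((-\infty,-|m|]\cup[|m|,+\infty))$ is an eigenvalue of $D^\varepsilon_A$ if and only if $$\det\Big(\sigma_0+\tfrac{i}{2}\alpha_1(\varepsilon k(z))AZ(z)\Big)=0.$$ The geometric multiplicity of such $z$ equals $\dim\ker\big(\sigma_0+\tfrac{i}{2}\alpha_1(\varepsilon k(z))AZ(z)\big)\le2$, and the eigenfunctions are exactly the functions $\psi(x)=\int_{\mathbb{R}}R_z(x,y)\tau v_\varepsilon(y)\,dy$ with $\tau\in\ker\big(\sigma_0+\tfrac{i}{2}\alpha_1(\varepsilon k(z))AZ(z)\big)\setminus\{0\}$.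
   Context: Let $\sigma_0=I_2$, $\sigma_1=\begin{pmatrix}0&1\\1&0\end{pmatrix}$, $\sigma_3=\begin{pmatrix}1&0\\0&-1\end{pmatrix}$. $D_0$ is the free Dirac operator $-i\sigma_1\frac{d}{dx}+m\sigma_3$ on $H^1(\mathbb{R};\mathbb{C}^2)$. For $\varepsilon>0$, $v_\varepsilon(x)=\varepsilon^{-1}v(x/\varepsilon)$, and $D^\varepsilon_A$ is the operator with domain $H^1(\mathbb{R};\mathbb{C}^2)$ acting by $(D^\varepsilon_A\psi)(x)=(D_0\psi)(x)+A\big(\int_{\mathbb{R}}v_\varepsilon(y)\psi(y)\,dy\big)v_\varepsilon(x)$. Branch convention: $\mathrm{Im}\sqrt{w}>0$ for $w\in\mathbb{C}\setminus[0,+\infty)$. For $z\in\mathbb{C}\setminus((-\infty,-|m|]\cup[|m|,+\infty))$: $k(z)=\sqrt{z^2-m^2}$, $\zeta(z)=\frac{z+m}{k(z)}$, $Z(z)=\mathrm{diag}(\zeta(z),\zeta(z)^{-1})$, $R_z(x,y)=\frac{i}{2}\big(Z(z)+\mathrm{sgn}(x-y)\sigma_1\big)e^{ik(z)|x-y|}$. For $w\in\mathbb{C}$ with $\mathrm{Im}\,w>0$, $\alpha_1(w)=\int_{\mathbb{R}^2}v(x)e^{iw|x-y|}v(y)\,dx\,dy$. *)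

theory Defs
  imports "HOL-Analysis.Analysis" "HOL-Library.Function_Algebras"
begin

type_synonym cvec = "complex ^ 2"
type_synonym cmat = "complex ^ 2 ^ 2"

definition sigma0 :: cmat where "sigma0 = mat 1"
definition sigma1 :: cmat where
  "sigma1 = (\<chi> i j. if i = j then 0 else 1)"
definition sigma3 :: cmat where
  "sigma3 = (\<chi> i j. if i = j then (if i = 1 then 1 else -1) else 0)"

definition L2 :: "(real \<Rightarrow> 'a::{banach, second_countable_topology}) \<Rightarrow> bool" where
  "L2 f \<longleftrightarrow> f \<in> borel_measurable lborel \<and> integrable lborel (\<lambda>x. (norm (f x))^2)"

text \<open>phi is a weak (= a.e.) derivative of psi: psi is absolutely continuous with
  psi b - psi a = integral of phi over [a,b].\<close>
definition is_weak_deriv :: "(real \<Rightarrow> cvec) \<Rightarrow> (real \<Rightarrow> cvec) \<Rightarrow> bool" where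
  "is_weak_deriv psi phi \<longleftrightarrow> (\<forall>a b. a \<le> b \<longrightarrow> (phi has_integral (psi b - psi a)) {a..b})"

text \<open>Sobolev space H^1(R;C^2), represented by continuous representatives.\<close>
definition H1 :: "(real \<Rightarrow> cvec) \<Rightarrow> bool" where
  "H1 psi \<longleftrightarrow> L2 psi \<and> (\<exists>phi. L2 phi \<and> is_weak_deriv psi phi)"

definition v_eps :: "(real \<Rightarrow> real) \<Rightarrow> real \<Rightarrow> real \<Rightarrow> real" where
  "v_eps v \<epsilon> x = v (x / \<epsilon>) / \<epsilon>"

definition D_action ::
  "real \<Rightarrow> cmat \<Rightarrow> (real \<Rightarrow> real) \<Rightarrow> real \<Rightarrow> (real \<Rightarrow> cvec) \<Rightarrow> (real \<Rightarrow> cvec) \<Rightarrow> real \<Rightarrow> cvec" where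
  "D_action m A v \<epsilon> psi phi x =
     (- \<i>) *s (sigma1 *v phi x) + (complex_of_real m) *s (sigma3 *v psi x)
     + v_eps v \<epsilon> x *\<^sub>R (A *v (integral\<^sup>L lborel (\<lambda>y. v_eps v \<epsilon> y *\<^sub>R psi y)))"

definition eigenspace ::
  "real \<Rightarrow> cmat \<Rightarrow> (real \<Rightarrow> real) \<Rightarrow> real \<Rightarrow> complex \<Rightarrow> (real \<Rightarrow> cvec) set" where
  "eigenspace m A v \<epsilon> z = {psi. H1 psi \<and> (\<exists>phi. L2 phi \<and> is_weak_deriv psi phi \<and>
      (AE x in lborel. D_action m A v \<epsilon> psi phi x = z *s psi x))}"

definition is_eigenfunction ::
  "real \<Rightarrow> cmat \<Rightarrow> (real \<Rightarrow> real) \<Rightarrow> real \<Rightarrow> complex \<Rightarrow> (real \<Rightarrow> cvec) \<Rightarrow> bool" where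
  "is_eigenfunction m A v \<epsilon> z psi \<longleftrightarrow> psi \<in> eigenspace m A v \<epsilon> z \<and> psi \<noteq> (\<lambda>x. 0)"

definition is_eigenvalue :: "real \<Rightarrow> cmat \<Rightarrow> (real \<Rightarrow> real) \<Rightarrow> real \<Rightarrow> complex \<Rightarrow> bool" where
  "is_eigenvalue m A v \<epsilon> z \<longleftrightarrow> (\<exists>psi. is_eigenfunction m A v \<epsilon> z psi)"

definition fscale :: "complex \<Rightarrow> (real \<Rightarrow> cvec) \<Rightarrow> (real \<Rightarrow> cvec)" where
  "fscale c f = (\<lambda>x. c *s f x)"

lemma fscale_vector_space: "vector_space fscale"
  by unfold_locales (auto simp: fscale_def fun_eq_iff vec.scale_right_distrib vec.scale_left_distrib)

definition geom_mult :: "real \<Rightarrow> cmat \<Rightarrow> (real \<Rightarrow> real) \<Rightarrow> real \<Rightarrow> complex \<Rightarrow> nat" where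
  "geom_mult m A v \<epsilon> z = vector_space.dim fscale (eigenspace m A v \<epsilon> z)"

text \<open>Square root with the branch Im sqrt w > 0 (for w not in [0,+infinity)).\<close>
definition sqrt_up :: "complex \<Rightarrow> complex" where
  "sqrt_up w = (THE s. s^2 = w \<and> Im s > 0)"

definition spec_gap :: "real \<Rightarrow> complex set" where
  "spec_gap m = - {complex_of_real t | t. t \<le> - \<bar>m\<bar> \<or> t \<ge> \<bar>m\<bar>}"

definition kk :: "real \<Rightarrow> complex \<Rightarrow> complex" where
  "kk m z = sqrt_up (z^2 - (complex_of_real m)^2)"

definition zeta :: "real \<Rightarrow> complex \<Rightarrow> complex" where
  "zeta m z = (z + complex_of_real m) / kk m z"

definition ZZ :: "real \<Rightarrow> complex \<Rightarrow> cmat" where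
  "ZZ m z = (\<chi> i j. if i = j then (if i = 1 then zeta m z else inverse (zeta m z)) else 0)"

definition Rz :: "real \<Rightarrow> complex \<Rightarrow> real \<Rightarrow> real \<Rightarrow> cmat" where
  "Rz m z x y = mat (\<i> / 2 * exp (\<i> * kk m z * complex_of_real \<bar>x - y\<bar>))
       ** (ZZ m z + mat (complex_of_real (sgn (x - y))) ** sigma1)"

definition alpha1 :: "(real \<Rightarrow> real) \<Rightarrow> complex \<Rightarrow> complex" where
  "alpha1 v w = (\<integral>x. (\<integral>y. complex_of_real (v x) * exp (\<i> * w * complex_of_real \<bar>x - y\<bar>)
                        * complex_of_real (v y) \<partial>lborel) \<partial>lborel)"

definition Mmat :: "real \<Rightarrow> cmat \<Rightarrow> (real \<Rightarrow> real) \<Rightarrow> real \<Rightarrow> complex \<Rightarrow> cmat" where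
  "Mmat m A v \<epsilon> z = sigma0 + mat (\<i> / 2 * alpha1 v (complex_of_real \<epsilon> * kk m z)) ** (A ** ZZ m z)"

definition psi_tau :: "real \<Rightarrow> (real \<Rightarrow> real) \<Rightarrow> real \<Rightarrow> complex \<Rightarrow> cvec \<Rightarrow> real \<Rightarrow> cvec" where
  "psi_tau m v \<epsilon> z \<tau> x = integral\<^sup>L lborel (\<lambda>y. v_eps v \<epsilon> y *\<^sub>R (Rz m z x y *v \<tau>))"

end

theory Submission
  imports Defs
begin

text \<open>
  For \<open>z\<close> in the gap, \<open>k = k(z)\<close> has positive imaginary part, and \<open>\<psi>\<^sub>\<tau> = \<integral> R\<^sub>z(\<cdot>, y) \<tau> v\<^sub>\<epsilon>(y) dy\<close>
  is a combination of the two one-sided convolutions of \<open>v\<^sub>\<epsilon>\<close> with \<open>exp (\<i> k \<bar>x\<bar>)\<close>; it lies in \<open>H\<^sup>1\<close> and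
  solves \<open>(D\<^sub>0 - z) \<psi>\<^sub>\<tau> = v\<^sub>\<epsilon> \<tau>\<close>. If \<open>D\<^sup>\<epsilon>\<^sub>A \<psi> = z \<psi>\<close> and \<open>c = \<integral> v\<^sub>\<epsilon> \<psi>\<close>, then \<open>u = \<psi> - \<psi>\<^sub>\<tau>\<close>
  with \<open>\<tau> = - A c\<close> solves \<open>(D\<^sub>0 - z) u = 0\<close>. As \<open>k\<^sup>2 = (z - m)(z + m)\<close>, the combinations
  \<open>k u\<^sub>1 \<plusminus> (z + m) u\<^sub>2\<close> are multiples of \<open>exp (\<plusminus>\<i> k x)\<close>, which are square integrable only when they
  vanish; hence \<open>\<psi> = \<psi>\<^sub>\<tau>\<close>. Then \<open>c = \<integral> v\<^sub>\<epsilon> \<psi>\<^sub>\<tau> = \<i>/2 \<alpha>\<^sub>1(\<epsilon> k) Z \<tau>\<close>, and \<open>\<tau> = - A c\<close> becomes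
  \<open>(\<sigma>\<^sub>0 + \<i>/2 \<alpha>\<^sub>1(\<epsilon> k) A Z) \<tau> = 0\<close>. Conversely every \<open>\<tau>\<close> in this kernel yields the eigenfunction
  \<open>\<psi>\<^sub>\<tau>\<close>, and \<open>\<tau> \<mapsto> \<psi>\<^sub>\<tau>\<close> is linear and injective.
\<close>

lemma vec2_eq_iff: "(u::'a^2) = v \<longleftrightarrow> u$1 = v$1 \<and> u$2 = v$2"
  by (simp add: vec_eq_iff forall_2)

lemma matrix_vector_mult_2:
  "(M *v (t::'a::semiring_1^2)) $ 1 = M$1$1 * t$1 + M$1$2 * t$2"
  "(M *v t) $ 2 = M$2$1 * t$1 + M$2$2 * t$2"
  by (simp_all add: matrix_vector_mult_def sum_2)

lemma matrix_matrix_mult_2: "((M::'a::semiring_1^2^2) ** N) $ i $ j = M$i$1 * N$1$j + M$i$2 * N$2$j"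
  by (simp add: matrix_matrix_mult_def sum_2)

lemma mat_2_nth:
  "(mat c :: 'a::zero^2^2) $ 1 $ 1 = c" "(mat c :: 'a^2^2) $ 1 $ 2 = 0"
  "(mat c :: 'a^2^2) $ 2 $ 1 = 0" "(mat c :: 'a^2^2) $ 2 $ 2 = c"
  by (simp_all add: mat_def)

lemma sigma0_nth: "sigma0 $ 1 $ 1 = 1" "sigma0 $ 1 $ 2 = 0" "sigma0 $ 2 $ 1 = 0" "sigma0 $ 2 $ 2 = 1"
  by (simp_all add: sigma0_def mat_def)

lemma sigma1_nth: "sigma1 $ 1 $ 1 = 0" "sigma1 $ 1 $ 2 = 1" "sigma1 $ 2 $ 1 = 1" "sigma1 $ 2 $ 2 = 0"
  by (simp_all add: sigma1_def)

lemma sigma3_nth: "sigma3 $ 1 $ 1 = 1" "sigma3 $ 1 $ 2 = 0" "sigma3 $ 2 $ 1 = 0" "sigma3 $ 2 $ 2 = -1"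
  by (simp_all add: sigma3_def)

lemma ZZ_nth:
  "ZZ m z $ 1 $ 1 = zeta m z" "ZZ m z $ 1 $ 2 = 0" "ZZ m z $ 2 $ 1 = 0" "ZZ m z $ 2 $ 2 = inverse (zeta m z)"
  by (simp_all add: ZZ_def)

lemmas matrix_entries_2 =
  matrix_vector_mult_2 matrix_matrix_mult_2 mat_2_nth sigma0_nth sigma1_nth sigma3_nth ZZ_nth

lemma scaleR_vec_nth_complex: "(r *\<^sub>R (u :: complex ^ 'n)) $ i = complex_of_real r * u $ i"
  by (metis vector_scaleR_component scaleR_conv_of_real)

lemma free_dirac_components:
  fixes p u :: "complex ^ 2"
  assumes "(- \<i>) *s (sigma1 *v p) + complex_of_real m *s (sigma3 *v u) = z *s u"
  shows "p $ 2 = \<i> * ((z - complex_of_real m) * u $ 1)" and "p $ 1 = \<i> * ((z + complex_of_real m) * u $ 2)"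
proof -
  have "- \<i> * p $ 2 + complex_of_real m * u $ 1 = z * u $ 1"
    using arg_cong[OF assms, of "\<lambda>v. v $ 1"] by (simp add: matrix_entries_2)
  then have "\<i> * (- \<i> * p $ 2) = \<i> * ((z - complex_of_real m) * u $ 1)" by algebra
  then show "p $ 2 = \<i> * ((z - complex_of_real m) * u $ 1)" by simp
  have "- (complex_of_real m * u $ 2) - \<i> * p $ 1 = z * u $ 2"
    using arg_cong[OF assms, of "\<lambda>v. v $ 2"] by (simp add: matrix_entries_2)
  then have "\<i> * (- \<i> * p $ 1) = \<i> * ((z + complex_of_real m) * u $ 2)" by algebra
  then show "p $ 1 = \<i> * ((z + complex_of_real m) * u $ 2)" by simp
qed

text \<open>The algebra behind \<open>(D\<^sub>0 - z) R\<^sub>z = \<delta>\<close>: it uses only \<open>\<zeta> k = z + m\<close> and \<open>k = (z - m) \<zeta>\<close>.\<close>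

lemma dirac_kernel_identities:
  fixes E1 E2 W t1 t2 \<zeta> k z m :: complex
  assumes h1: "\<zeta> * k = z + m" and h2: "k = (z - m) * \<zeta>" and h3: "\<zeta> \<noteq> 0"
  shows "- \<i> * (\<i>/2 * (\<i>*k*E1 + W) * (t1 + inverse \<zeta> * t2) + \<i>/2 * (-\<i>*k*E2 - W) * (- t1 + inverse \<zeta> * t2))
         + m * (\<i>/2 * E1 * (\<zeta>*t1 + t2) + \<i>/2 * E2 * (\<zeta>*t1 - t2))
       = z * (\<i>/2 * E1 * (\<zeta>*t1 + t2) + \<i>/2 * E2 * (\<zeta>*t1 - t2)) + W * t1"
    and "- \<i> * (\<i>/2 * (\<i>*k*E1 + W) * (\<zeta>*t1 + t2) + \<i>/2 * (-\<i>*k*E2 - W) * (\<zeta>*t1 - t2))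
         - m * (\<i>/2 * E1 * (t1 + inverse \<zeta> * t2) + \<i>/2 * E2 * (- t1 + inverse \<zeta> * t2))
       = z * (\<i>/2 * E1 * (t1 + inverse \<zeta> * t2) + \<i>/2 * E2 * (- t1 + inverse \<zeta> * t2)) + W * t2"
proof -
  have "z - m = k / \<zeta>" using h2 h3 by (simp add: field_simps)
  then have z: "z = (\<zeta> * k + k / \<zeta>) / 2" and m: "m = (\<zeta> * k - k / \<zeta>) / 2"
    using h1 by (simp_all add: field_simps)
  show "- \<i> * (\<i>/2 * (\<i>*k*E1 + W) * (t1 + inverse \<zeta> * t2) + \<i>/2 * (-\<i>*k*E2 - W) * (- t1 + inverse \<zeta> * t2))
         + m * (\<i>/2 * E1 * (\<zeta>*t1 + t2) + \<i>/2 * E2 * (\<zeta>*t1 - t2))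
       = z * (\<i>/2 * E1 * (\<zeta>*t1 + t2) + \<i>/2 * E2 * (\<zeta>*t1 - t2)) + W * t1"
    unfolding z m using h3 by (simp add: field_simps)
  show "- \<i> * (\<i>/2 * (\<i>*k*E1 + W) * (\<zeta>*t1 + t2) + \<i>/2 * (-\<i>*k*E2 - W) * (\<zeta>*t1 - t2))
         - m * (\<i>/2 * E1 * (t1 + inverse \<zeta> * t2) + \<i>/2 * E2 * (- t1 + inverse \<zeta> * t2))
       = z * (\<i>/2 * E1 * (t1 + inverse \<zeta> * t2) + \<i>/2 * E2 * (- t1 + inverse \<zeta> * t2)) + W * t2"
    unfolding z m using h3 by (simp add: field_simps)
qed

lemma det_eq_0_iff_kernel:
  fixes M :: "'a::field ^ 'n ^ 'n"
  shows "det M = 0 \<longleftrightarrow> (\<exists>\<tau>. M *v \<tau> = 0 \<and> \<tau> \<noteq> 0)"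
  using invertible_det_nz[of M] invertible_left_inverse[of M] matrix_left_invertible_ker[of M] by blast

lemma dim_fscale_image_eq:
  fixes T :: "complex ^ 'n \<Rightarrow> real \<Rightarrow> complex ^ 2"
  assumes "Vector_Spaces.linear (*s) fscale T" and "inj T"
  shows "vector_space.dim fscale (T ` S) = vec.dim S"
proof -
  interpret finite_dimensional_vector_space_pair_1 "(*s) :: complex \<Rightarrow> complex ^ 'n \<Rightarrow> _" cart_basis fscale
    by (rule finite_dimensional_vector_space_pair_1.intro[OF vec.finite_dimensional_vector_space_axioms
          fscale_vector_space])
  show ?thesis
    using assms by (intro dim_image_eq) (auto intro: inj_on_subset)
qed

section \<open>The square root \<open>k(z)\<close>\<close>

lemma sqrt_up_eq:
  assumes "s^2 = w" and "0 < Im s"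
  shows "sqrt_up w = s"
  unfolding sqrt_up_def
proof (rule the_equality)
  fix t assume t: "t^2 = w \<and> 0 < Im t"
  then have "(t - s) * (t + s) = 0" using assms(1) by (simp add: algebra_simps power2_eq_square)
  then have "t = s \<or> t = - s" by (auto simp: add_eq_0_iff)
  then show "t = s" using t assms(2) by auto
qed (use assms in auto)

lemma
  assumes "\<not> (\<exists>r\<ge>0. w = complex_of_real r)"
  shows sqrt_up_squared: "(sqrt_up w)^2 = w" and Im_sqrt_up_pos: "0 < Im (sqrt_up w)"
proof -
  have "Im (csqrt w) \<noteq> 0"
  proof
    assume "Im (csqrt w) = 0"
    then have "csqrt w = complex_of_real (Re (csqrt w))" by (simp add: complex_eq_iff)
    then have "w = complex_of_real ((Re (csqrt w))^2)"
      by (metis power2_csqrt of_real_power)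
    then show False using assms zero_le_power2 by blast
  qed
  then obtain s0 where s0: "s0^2 = w" "Im s0 \<noteq> 0"
    using power2_csqrt by blast
  then consider "0 < Im s0" | "0 < Im (- s0)" by fastforce
  then obtain s where "s^2 = w" "0 < Im s"
    using s0 by (metis power2_minus)
  then show "(sqrt_up w)^2 = w" "0 < Im (sqrt_up w)"
    by (simp_all add: sqrt_up_eq)
qed

lemma spec_gap_not_nonneg_real:
  assumes "z \<in> spec_gap m"
  shows "\<not> (\<exists>r\<ge>0. z^2 - (complex_of_real m)^2 = complex_of_real r)"
proof
  assume "\<exists>r\<ge>0. z^2 - (complex_of_real m)^2 = complex_of_real r"
  then obtain r where r: "r \<ge> 0" "z^2 - (complex_of_real m)^2 = complex_of_real r" by blast
  have re: "(Re z)^2 - (Im z)^2 = r + m^2"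
    using arg_cong[OF r(2), of Re] by (simp add: power2_eq_square)
  have im: "Re z = 0 \<or> Im z = 0"
    using arg_cong[OF r(2), of Im] by (auto simp: power2_eq_square)
  have "Im z = 0"
  proof (rule ccontr)
    assume "Im z \<noteq> 0"
    then have "- ((Im z)^2) = r + m^2" "(Im z)^2 > 0" using im re by auto
    then show False using r(1) by (smt (verit) zero_le_power2)
  qed
  then have zr: "z = complex_of_real (Re z)" by (simp add: complex_eq_iff)
  have "(Re z)^2 \<ge> m^2" using re r(1) \<open>Im z = 0\<close> by simp
  then have "\<bar>Re z\<bar> \<ge> \<bar>m\<bar>" by (simp add: abs_le_square_iff)
  then have "Re z \<le> - \<bar>m\<bar> \<or> Re z \<ge> \<bar>m\<bar>" by linarith
  then show False using assms zr unfolding spec_gap_def by blast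
qed

lemma spec_gap_add_nonzero:
  assumes "z \<in> spec_gap m"
  shows "z + complex_of_real m \<noteq> 0"
proof
  assume "z + complex_of_real m = 0"
  then have "z = complex_of_real (- m)" by (simp add: eq_neg_iff_add_eq_0)
  moreover have "- m \<le> - \<bar>m\<bar> \<or> - m \<ge> \<bar>m\<bar>" by linarith
  ultimately show False using assms unfolding spec_gap_def by blast
qed

lemma
  assumes "z \<in> spec_gap m"
  shows kk_squared: "(kk m z)^2 = z^2 - (complex_of_real m)^2" and Im_kk_pos: "0 < Im (kk m z)"
  using sqrt_up_squared Im_sqrt_up_pos spec_gap_not_nonneg_real[OF assms] unfolding kk_def by auto

lemma bounded_linear_vector_smult_left: "bounded_linear (\<lambda>t::complex. t *s (c :: complex ^ 'n))"
proof -
  have "linear (\<lambda>t::complex. t *s c)"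
    by (rule linearI) (simp_all add: vec_eq_iff algebra_simps)
  then show ?thesis by (simp add: linear_conv_bounded_linear)
qed

lemma borel_measurable_vector_smult_left [measurable (raw)]:
  fixes g :: "'a \<Rightarrow> complex" and c :: "complex ^ 'n"
  assumes "g \<in> borel_measurable M"
  shows "(\<lambda>x. g x *s c) \<in> borel_measurable M"
  using borel_measurable_continuous_on[OF linear_continuous_on[OF bounded_linear_vector_smult_left] assms]
  by blast

lemma borel_measurable_vec_nth_comp [measurable (raw)]:
  fixes f :: "'a \<Rightarrow> 'b::real_normed_vector ^ 'n"
  assumes "f \<in> borel_measurable M"
  shows "(\<lambda>x. f x $ i) \<in> borel_measurable M"
  using borel_measurable_continuous_on[OF linear_continuous_on[OF bounded_linear_vec_nth] assms]
  by blast

lemma norm_vector_smult: "norm (t *s (c :: 'a::real_normed_field ^ 'n)) = norm t * norm c"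
  by (simp add: norm_vec_def norm_mult L2_set_right_distrib)

lemma has_integral_vector_smult_left:
  fixes f :: "real \<Rightarrow> complex"
  shows "(f has_integral y) S \<Longrightarrow> ((\<lambda>x. f x *s c) has_integral y *s c) S"
  using has_integral_linear[OF _ bounded_linear_vector_smult_left] by (simp add: o_def)

lemma integrable_norm_square_if_bounded:
  fixes f :: "'a \<Rightarrow> 'b::{banach, second_countable_topology}"
  assumes f: "integrable M f" and bound: "\<And>x. norm (f x) \<le> C"
  shows "integrable M (\<lambda>x. (norm (f x))^2)"
proof (rule Bochner_Integration.integrable_bound)
  show "integrable M (\<lambda>x. C * norm (f x))"
    using f by auto
  show "(\<lambda>x. (norm (f x))\<^sup>2) \<in> borel_measurable M"
    using f by measurable
  show "AE x in M. norm ((norm (f x))\<^sup>2) \<le> norm (C * norm (f x))"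
  proof (intro AE_I2)
    fix x
    have "0 \<le> C" using bound[of x] norm_ge_zero order_trans by blast
    then show "norm ((norm (f x))\<^sup>2) \<le> norm (C * norm (f x))"
      using bound[of x] by (simp add: power2_eq_square abs_mult mult_right_mono)
  qed
qed

lemma integrable_of_real_mult_bounded:
  fixes w :: "real \<Rightarrow> real" and g :: "real \<Rightarrow> complex"
  assumes w: "integrable lborel w" and g: "g \<in> borel_measurable lborel" and bound: "\<And>x. cmod (g x) \<le> C"
  shows "integrable lborel (\<lambda>x. complex_of_real (w x) * g x)"
proof (rule Bochner_Integration.integrable_bound[where f="\<lambda>x. C * w x"])
  show "integrable lborel (\<lambda>x. C * w x)" using w by simp
  show "(\<lambda>x. complex_of_real (w x) * g x) \<in> borel_measurable lborel"
    using borel_measurable_integrable[OF w] g by measurable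
  have "\<bar>w x\<bar> * cmod (g x) \<le> \<bar>C * w x\<bar>" for x
  proof -
    have "\<bar>w x\<bar> * cmod (g x) \<le> \<bar>w x\<bar> * C" using bound[of x] by (rule mult_left_mono) simp
    also have "\<dots> \<le> \<bar>C * w x\<bar>" by (simp add: abs_mult mult.commute mult_right_mono)
    finally show ?thesis .
  qed
  then show "AE x in lborel. norm (complex_of_real (w x) * g x) \<le> norm (C * w x)"
    by (simp add: norm_mult)
qed

lemma L2_add:
  assumes f: "L2 f" and g: "L2 g"
  shows "L2 (\<lambda>x. f x + g x)"
  unfolding L2_def
proof
  note [measurable] = f[unfolded L2_def, THEN conjunct1] g[unfolded L2_def, THEN conjunct1]
  show "(\<lambda>x. f x + g x) \<in> borel_measurable lborel" by measurable
  show "integrable lborel (\<lambda>x. (norm (f x + g x))^2)"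
  proof (rule Bochner_Integration.integrable_bound)
    show "integrable lborel (\<lambda>x. 2 * (norm (f x))^2 + 2 * (norm (g x))^2)"
      using f g unfolding L2_def by simp
    show "(\<lambda>x. (norm (f x + g x))^2) \<in> borel_measurable lborel" by measurable
    have "(norm (f x + g x))^2 \<le> 2 * (norm (f x))^2 + 2 * (norm (g x))^2" for x
    proof -
      have "(norm (f x + g x))^2 \<le> (norm (f x) + norm (g x))^2"
        by (intro power_mono norm_triangle_ineq) simp
      also have "\<dots> \<le> 2 * (norm (f x))^2 + 2 * (norm (g x))^2"
        using sum_squares_bound[of "norm (f x)" "norm (g x)"] by (simp add: power2_eq_square algebra_simps)
      finally show ?thesis .
    qed
    then show "AE x in lborel. norm ((norm (f x + g x))^2) \<le> norm (2 * (norm (f x))^2 + 2 * (norm (g x))^2)"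
      by (intro AE_I2) simp
  qed
qed

lemma L2_minus: "L2 f \<Longrightarrow> L2 (\<lambda>x. - f x)"
  by (simp add: L2_def)

lemma L2_diff: "L2 f \<Longrightarrow> L2 g \<Longrightarrow> L2 (\<lambda>x. f x - g x)"
  using L2_add[OF _ L2_minus] by fastforce

lemma L2_mult_left:
  fixes f :: "real \<Rightarrow> 'a::{real_normed_field, banach, second_countable_topology}"
  shows "L2 f \<Longrightarrow> L2 (\<lambda>x. c * f x)"
  by (simp add: L2_def norm_mult power_mult_distrib borel_measurable_times)

lemma L2_vector_smult:
  fixes f :: "real \<Rightarrow> complex"
  shows "L2 f \<Longrightarrow> L2 (\<lambda>x. f x *s c)"
  by (simp add: L2_def norm_vector_smult power_mult_distrib borel_measurable_vector_smult_left)

lemma L2_of_real: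
  fixes f :: "real \<Rightarrow> real"
  shows "f \<in> borel_measurable lborel \<Longrightarrow> integrable lborel (\<lambda>x. (f x)^2) \<Longrightarrow> L2 (\<lambda>x. complex_of_real (f x))"
  by (simp add: L2_def)

lemma is_weak_deriv_diff:
  "is_weak_deriv f f' \<Longrightarrow> is_weak_deriv g g' \<Longrightarrow> is_weak_deriv (\<lambda>x. f x - g x) (\<lambda>x. f' x - g' x)"
  unfolding is_weak_deriv_def by (auto intro!: has_integral_diff[THEN has_integral_eq_rhs])

lemma square_integrable_linear_combination:
  fixes u :: "real \<Rightarrow> complex ^ 2"
  assumes "L2 u"
  shows "integrable lborel (\<lambda>x. (cmod (\<alpha> * u x $ 1 + \<beta> * u x $ 2))^2)"
proof (rule Bochner_Integration.integrable_bound)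
  note [measurable] = assms[unfolded L2_def, THEN conjunct1]
  show "integrable lborel (\<lambda>x. (cmod \<alpha> + cmod \<beta>)^2 * (norm (u x))^2)"
    using assms unfolding L2_def by simp
  show "(\<lambda>x. (cmod (\<alpha> * u x $ 1 + \<beta> * u x $ 2))^2) \<in> borel_measurable lborel"
    by measurable
  have "cmod (\<alpha> * u x $ 1 + \<beta> * u x $ 2) \<le> (cmod \<alpha> + cmod \<beta>) * norm (u x)" for x
  proof -
    have "cmod (\<alpha> * u x $ 1 + \<beta> * u x $ 2) \<le> cmod \<alpha> * cmod (u x $ 1) + cmod \<beta> * cmod (u x $ 2)"
      by (rule order_trans[OF norm_triangle_ineq]) (simp add: norm_mult)
    also have "\<dots> \<le> cmod \<alpha> * norm (u x) + cmod \<beta> * norm (u x)"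
      by (intro add_mono mult_left_mono) (auto simp: Finite_Cartesian_Product.norm_nth_le)
    finally show ?thesis by (simp add: algebra_simps)
  qed
  then show "AE x in lborel. norm ((cmod (\<alpha> * u x $ 1 + \<beta> * u x $ 2))^2) \<le> norm ((cmod \<alpha> + cmod \<beta>)^2 * (norm (u x))^2)"
    by (intro AE_I2) (simp add: power_mult_distrib[symmetric] power_mono)
qed

section \<open>Exponential solutions of \<open>f' = l f\<close>\<close>

lemma emeasure_lborel_atLeast: "emeasure lborel {a::real..} = \<infinity>"
proof (rule ccontr)
  assume "emeasure lborel {a..} \<noteq> \<infinity>"
  then obtain n :: nat where "emeasure lborel {a..} < of_nat n"
    using ennreal_Ex_less_of_nat[of "emeasure lborel {a..}"] by (auto simp: less_top)
  moreover have "ennreal (real n) \<le> emeasure lborel {a..}"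
    using emeasure_mono[of "{a..a + real n}" "{a..}" lborel] by simp
  ultimately show False by (simp add: ennreal_of_nat_eq_real_of_nat)
qed

lemma emeasure_lborel_atMost: "emeasure lborel {..a::real} = \<infinity>"
proof (rule ccontr)
  assume "emeasure lborel {..a} \<noteq> \<infinity>"
  then obtain n :: nat where "emeasure lborel {..a} < of_nat n"
    using ennreal_Ex_less_of_nat[of "emeasure lborel {..a}"] by (auto simp: less_top)
  moreover have "ennreal (real n) \<le> emeasure lborel {..a}"
    using emeasure_mono[of "{a - real n..a}" "{..a}" lborel] by simp
  ultimately show False by (simp add: ennreal_of_nat_eq_real_of_nat)
qed

lemma square_integrable_exp_eq_0:
  fixes c l :: complex
  assumes l: "Re l \<noteq> 0"
    and int: "integrable lborel (\<lambda>x::real. (cmod (c * exp (l * complex_of_real x)))^2)"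
  shows "c = 0"
proof (rule ccontr)
  assume c: "c \<noteq> 0"
  define S :: "real set" where "S = (if Re l > 0 then {0..} else {..0})"
  have "(cmod c)^2 \<le> (cmod (c * exp (l * complex_of_real x)))^2" if "x \<in> S" for x
  proof -
    have "0 \<le> Re l * x"
      using that l unfolding S_def by (auto split: if_splits intro: mult_nonneg_nonneg mult_nonpos_nonpos)
    then have "cmod c \<le> cmod c * exp (Re l * x)" by (simp add: mult_le_cancel_left1)
    then show ?thesis by (simp add: norm_mult norm_exp_eq_Re power_mono)
  qed
  then have "integrable lborel (\<lambda>x. indicator S x *\<^sub>R (cmod c)^2)"
    by (intro Bochner_Integration.integrable_bound[OF int] AE_I2) (auto simp: S_def indicator_def)
  then have "integrable lborel (\<lambda>x. (1 / (cmod c)^2) * (indicator S x *\<^sub>R (cmod c)^2))"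
    by (rule integrable_mult_right)
  moreover have "(\<lambda>x. (1 / (cmod c)^2) * (indicator S x *\<^sub>R (cmod c)^2)) = indicator S"
    using c by (auto simp: fun_eq_iff indicator_def)
  ultimately have "integrable lborel (indicator S :: real \<Rightarrow> real)"
    by simp
  then show False
    by (simp add: integrable_indicator_iff S_def emeasure_lborel_atLeast emeasure_lborel_atMost split: if_splits)
qed

lemma weak_linear_ode_has_vector_derivative:
  fixes f :: "real \<Rightarrow> complex" and l :: complex
  assumes ode: "\<And>a b. a \<le> b \<Longrightarrow> ((\<lambda>x. l * f x) has_integral (f b - f a)) {a..b}"
  shows "(f has_vector_derivative l * f t) (at t)"
proof -
  have rep: "f u = f a + integral {a..u} (\<lambda>x. l * f x)" if "a \<le> u" for a u
    using integral_unique[OF ode[OF that]] by simp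
  have integrable: "(\<lambda>x. l * f x) integrable_on {a..b}" if "a \<le> b" for a b
    using ode[OF that] by blast
  have "continuous_on {a..b} f" if "a \<le> b" for a b
  proof -
    have "continuous_on {a..b} (\<lambda>u. f a + integral {a..u} (\<lambda>x. l * f x))"
      by (intro continuous_intros indefinite_integral_continuous_1 integrable that)
    then show ?thesis by (rule continuous_on_eq) (metis atLeastAtMost_iff rep)
  qed
  then have "continuous_on {t-1..t+1} (\<lambda>x. l * f x)"
    by (intro continuous_intros) simp
  then have "((\<lambda>u. integral {t-1..u} (\<lambda>x. l * f x)) has_vector_derivative l * f t) (at t within {t-1..t+1})"
    by (rule integral_has_vector_derivative) simp
  then have "((\<lambda>u. integral {t-1..u} (\<lambda>x. l * f x) + f (t-1)) has_vector_derivative l * f t)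
      (at t within {t-1..t+1})"
    by (simp add: has_vector_derivative_add_const)
  then have "(f has_vector_derivative l * f t) (at t within {t-1..t+1})"
    by (rule has_vector_derivative_transform[rotated 2]) (auto simp: rep)
  moreover have "at t within {t-1..t+1} = at t" by (intro at_within_interior) simp
  ultimately show ?thesis by metis
qed

lemma weak_linear_ode_solution:
  fixes f :: "real \<Rightarrow> complex" and l :: complex
  assumes ode: "\<And>a b. a \<le> b \<Longrightarrow> ((\<lambda>x. l * f x) has_integral (f b - f a)) {a..b}"
  shows "f x = f 0 * exp (l * complex_of_real x)"
proof -
  define g where "g t = f t * exp (- l * complex_of_real t)" for t
  have "(g has_vector_derivative 0) (at t within UNIV)" for t
  proof -
    have "((\<lambda>u. exp (- l * u)) has_field_derivative (- l * exp (- l * complex_of_real t))) (at (complex_of_real t))"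
      by (auto intro!: derivative_eq_intros)
    from has_vector_derivative_mult[OF weak_linear_ode_has_vector_derivative[OF ode]
        has_vector_derivative_real_field[OF this]]
    show ?thesis unfolding g_def by (simp add: algebra_simps)
  qed
  then obtain C where "\<And>t. t \<in> UNIV \<Longrightarrow> g t = C"
    using has_vector_derivative_zero_constant[of UNIV g] by blast
  then have "g x = g 0" by simp
  then have "f x * exp (- l * complex_of_real x) * exp (l * complex_of_real x) = f 0 * exp (l * complex_of_real x)"
    unfolding g_def by simp
  then show ?thesis by (simp add: mult.assoc exp_add[symmetric])
qed

lemma square_integrable_weak_exp_solution_eq_0:
  fixes f :: "real \<Rightarrow> complex" and l :: complex
  assumes l: "Re l \<noteq> 0"
    and ode: "\<And>a b. a \<le> b \<Longrightarrow> ((\<lambda>x. l * f x) has_integral (f b - f a)) {a..b}"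
    and square_integrable: "integrable lborel (\<lambda>x. (cmod (f x))^2)"
  shows "f x = 0"
proof -
  have sol: "f t = f 0 * exp (l * complex_of_real t)" for t
    using ode by (rule weak_linear_ode_solution)
  have "(\<lambda>t. (cmod (f t))^2) = (\<lambda>t. (cmod (f 0 * exp (l * complex_of_real t)))^2)"
    by (rule ext) (subst sol, rule refl)
  with square_integrable have "f 0 = 0"
    by (intro square_integrable_exp_eq_0[OF l]) simp
  then show ?thesis by (subst sol) simp
qed

lemma has_integral_UNIV_eq_0_if_intervals:
  fixes f :: "real \<Rightarrow> 'a::banach"
  assumes f: "(f has_integral I) UNIV" and intervals: "\<And>a b. a \<le> b \<Longrightarrow> (f has_integral 0) {a..b}"
  shows "I = 0"
proof (rule ccontr)
  assume "I \<noteq> 0"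
  then have "0 < norm I" by simp
  with has_integral_alt'[THEN iffD1, OF f] obtain B where B: "0 < B"
    "\<And>a b. ball 0 B \<subseteq> cbox a b \<Longrightarrow> norm (integral (cbox a b) (\<lambda>x. if x \<in> UNIV then f x else 0) - I) < norm I"
    by blast
  have "ball 0 B \<subseteq> cbox (- B) B" by (auto simp: dist_real_def)
  from B(2)[OF this] have "norm (integral {- B..B} f - I) < norm I" by simp
  moreover have "integral {- B..B} f = 0"
    using B(1) by (intro integral_unique intervals) simp
  ultimately show False by simp
qed

section \<open>One-sided exponential convolutions\<close>

lemma norm_exp_i_mult_le_1:
  fixes k :: complex assumes "0 \<le> Im k" "0 \<le> r"
  shows "cmod (exp (\<i> * k * complex_of_real r)) \<le> 1"
  using assms by (simp add: norm_exp_eq_Re)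

lemma norm_exp_kernel_le:
  fixes k :: complex assumes "0 \<le> Im k" and "P \<Longrightarrow> 0 \<le> r"
  shows "cmod (if P then complex_of_real a * exp (\<i> * k * complex_of_real r) else 0) \<le> \<bar>a\<bar>"
  using norm_exp_i_mult_le_1[OF assms] by (simp add: norm_mult mult_left_le)

lemma nn_integral_exp_decay:
  fixes a :: real assumes a: "0 < a"
  shows "(\<integral>\<^sup>+x. ennreal (if y \<le> x then exp (- a * (x - y)) else 0) \<partial>lborel) = ennreal (1 / a)"
proof -
  have meas: "(\<lambda>x. ennreal (if y \<le> x then exp (- a * (x - y)) else 0)) \<in> borel_measurable borel"
    by measurable
  have "(\<integral>\<^sup>+x. ennreal (if y \<le> x then exp (- a * (x - y)) else 0) \<partial>lborel)
      = (\<integral>\<^sup>+x. ennreal (if y \<le> y + 1 * x then exp (- a * (y + 1 * x - y)) else 0) \<partial>lborel)"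
    using nn_integral_real_affine[OF meas, of 1 y] by simp
  also have "\<dots> = (\<integral>\<^sup>+x. ennreal (if 0 \<le> x then exp (- a * x) else 0) \<partial>lborel)"
    by (rule nn_integral_cong) simp
  also have "\<dots> = ennreal (1 / a)"
  proof (rule nn_integral_has_integral_lborel)
    have "((\<lambda>x. exp (- a * x)) has_integral 1 / a) {0..}"
      using has_integral_exp_minus_to_infinity[OF a, of 0] by simp
    then show "((\<lambda>x. if 0 \<le> x then exp (- a * x) else 0) has_integral 1 / a) UNIV"
      by (subst (asm) has_integral_restrict_UNIV[symmetric]) simp
  qed (auto intro: measurable_If)
  finally show ?thesis .
qed

lemma integral_exp_Icc:
  fixes k :: complex assumes k: "k \<noteq> 0" and ab: "a \<le> b"
  shows "(\<integral>x. indicator {a..b} x *\<^sub>R exp (\<i> * k * complex_of_real (x - y)) \<partial>lborel)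
    = (exp (\<i> * k * complex_of_real (b - y)) - exp (\<i> * k * complex_of_real (a - y))) / (\<i> * k)"
proof -
  have "(\<integral>x. indicator {a..b} x *\<^sub>R exp (\<i> * k * complex_of_real (x - y)) \<partial>lborel)
    = exp (\<i> * k * complex_of_real (b - y)) / (\<i> * k) - exp (\<i> * k * complex_of_real (a - y)) / (\<i> * k)"
  proof (rule integral_FTC_atLeastAtMost[OF ab])
    fix x
    have "((\<lambda>u. exp (\<i> * k * (u - complex_of_real y)) / (\<i> * k)) has_field_derivative
           exp (\<i> * k * (complex_of_real x - complex_of_real y))) (at (complex_of_real x))"
      using k by (auto intro!: derivative_eq_intros simp: field_simps)
    from has_vector_derivative_real_field[OF this]
    show "((\<lambda>x. exp (\<i> * k * complex_of_real (x - y)) / (\<i> * k)) has_vector_derivative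
          exp (\<i> * k * complex_of_real (x - y))) (at x within {a..b})"
      by simp
  qed (intro continuous_intros)
  then show ?thesis by (simp add: diff_divide_distrib)
qed

lemma integral_left_exp_kernel_Icc:
  fixes k :: complex assumes k: "k \<noteq> 0" and ab: "a \<le> b"
  shows "(\<integral>x. (if a \<le> x \<and> x \<le> b \<and> y < x then exp (\<i> * k * complex_of_real (x - y)) else 0) \<partial>lborel) * (\<i> * k)
    = (if y < b then exp (\<i> * k * complex_of_real (b - y)) else 0)
      - (if y < a then exp (\<i> * k * complex_of_real (a - y)) else 0) - (if a \<le> y \<and> y < b then 1 else 0)"
    (is "?Q * _ = _")
proof -
  consider "y < a" | "a \<le> y" "y < b" | "b \<le> y" by linarith
  then show ?thesis
  proof cases
    case 1
    then have "?Q = (\<integral>x. indicator {a..b} x *\<^sub>R exp (\<i> * k * complex_of_real (x - y)) \<partial>lborel)"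
      by (intro Bochner_Integration.integral_cong) (auto simp: indicator_def)
    also have "\<dots> = (exp (\<i> * k * complex_of_real (b - y)) - exp (\<i> * k * complex_of_real (a - y))) / (\<i> * k)"
      by (rule integral_exp_Icc[OF k ab])
    finally show ?thesis using 1 ab k by simp
  next
    case 2
    have "?Q = (\<integral>x. indicator {y..b} x *\<^sub>R exp (\<i> * k * complex_of_real (x - y)) \<partial>lborel)"
    proof (rule integral_cong_AE)
      show "AE x in lborel. (if a \<le> x \<and> x \<le> b \<and> y < x then exp (\<i> * k * complex_of_real (x - y)) else 0)
          = indicator {y..b} x *\<^sub>R exp (\<i> * k * complex_of_real (x - y))"
        using AE_lborel_singleton[of y] by eventually_elim (use 2 in \<open>auto simp: indicator_def\<close>)
    qed (measurable, measurable)
    also have "\<dots> = (exp (\<i> * k * complex_of_real (b - y)) - exp (\<i> * k * complex_of_real (y - y))) / (\<i> * k)"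
      using 2 by (intro integral_exp_Icc[OF k]) simp
    finally show ?thesis using 2 k by simp
  next
    case 3
    then have "(\<lambda>x. if a \<le> x \<and> x \<le> b \<and> y < x then exp (\<i> * k * complex_of_real (x - y)) else 0) = (\<lambda>x. 0)"
      by auto
    with 3 ab show ?thesis by simp
  qed
qed

definition left_exp_conv :: "(real \<Rightarrow> real) \<Rightarrow> complex \<Rightarrow> real \<Rightarrow> complex" where
  "left_exp_conv w k x =
     (\<integral>y. (if y < x then complex_of_real (w y) * exp (\<i> * k * complex_of_real (x - y)) else 0) \<partial>lborel)"

context
  fixes w :: "real \<Rightarrow> real" and k :: complex
  assumes w: "integrable lborel w" and k: "0 < Im k"
begin

lemma integrable_left_exp_kernel:
  "integrable lborel (\<lambda>y. if y < x then complex_of_real (w y) * exp (\<i> * k * complex_of_real (x - y)) else 0)"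
  by (rule Bochner_Integration.integrable_bound[OF w])
    (use borel_measurable_integrable[OF w, measurable] in measurable,
     intro AE_I2 order_trans[OF norm_exp_kernel_le], use k in auto)

lemma integral_norm_left_exp_kernel_le:
  "(\<integral>y. norm (if y < x then complex_of_real (w y) * exp (\<i> * k * complex_of_real (x - y)) else 0) \<partial>lborel)
    \<le> (\<integral>y. \<bar>w y\<bar> \<partial>lborel)"
  using integrable_left_exp_kernel w k by (intro integral_mono norm_exp_kernel_le) auto

lemma norm_left_exp_conv_le: "cmod (left_exp_conv w k x) \<le> (\<integral>y. \<bar>w y\<bar> \<partial>lborel)"
  unfolding left_exp_conv_def by (rule order_trans[OF integral_norm_bound integral_norm_left_exp_kernel_le])

lemma borel_measurable_left_exp_conv: "left_exp_conv w k \<in> borel_measurable lborel"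
  using borel_measurable_integrable[OF w, measurable]
  unfolding left_exp_conv_def[abs_def] by measurable

lemma integrable_left_exp_conv: "integrable lborel (left_exp_conv w k)"
proof (rule integrableI_bounded)
  show "left_exp_conv w k \<in> borel_measurable lborel" by (rule borel_measurable_left_exp_conv)
  note borel_measurable_integrable[OF w, measurable]
  define K where "K x y = ennreal (\<bar>w y\<bar> * (if y \<le> x then exp (- Im k * (x - y)) else 0))" for x y
  have [measurable]: "case_prod K \<in> borel_measurable (lborel \<Otimes>\<^sub>M lborel)"
    unfolding K_def by measurable
  have "(\<integral>\<^sup>+ x. ennreal (norm (left_exp_conv w k x)) \<partial>lborel) \<le> (\<integral>\<^sup>+ x. (\<integral>\<^sup>+y. K x y \<partial>lborel) \<partial>lborel)"
  proof (intro nn_integral_mono)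
    fix x
    show "ennreal (norm (left_exp_conv w k x)) \<le> (\<integral>\<^sup>+y. K x y \<partial>lborel)"
      unfolding left_exp_conv_def
      by (intro order_trans[OF integral_norm_bound_ennreal[OF integrable_left_exp_kernel]] nn_integral_mono)
        (auto simp: K_def norm_mult norm_exp_eq_Re)
  qed
  also have "\<dots> = (\<integral>\<^sup>+ y. (\<integral>\<^sup>+x. K x y \<partial>lborel) \<partial>lborel)"
    by (rule lborel_pair.Fubini'[symmetric]) measurable
  also have "\<dots> = (\<integral>\<^sup>+ y. ennreal \<bar>w y\<bar> * ennreal (1 / Im k) \<partial>lborel)"
  proof (rule nn_integral_cong)
    fix y
    have "(\<integral>\<^sup>+x. K x y \<partial>lborel)
        = (\<integral>\<^sup>+x. ennreal \<bar>w y\<bar> * ennreal (if y \<le> x then exp (- Im k * (x - y)) else 0) \<partial>lborel)"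
      unfolding K_def by (simp add: ennreal_mult)
    also have "\<dots> = ennreal \<bar>w y\<bar> * (\<integral>\<^sup>+x. ennreal (if y \<le> x then exp (- Im k * (x - y)) else 0) \<partial>lborel)"
      by (rule nn_integral_cmult) measurable
    finally show "(\<integral>\<^sup>+x. K x y \<partial>lborel) = ennreal \<bar>w y\<bar> * ennreal (1 / Im k)"
      using nn_integral_exp_decay[OF k] by simp
  qed
  also have "\<dots> = (\<integral>\<^sup>+ y. ennreal \<bar>w y\<bar> \<partial>lborel) * ennreal (1 / Im k)"
    by (rule nn_integral_multc) measurable
  also have "\<dots> < \<infinity>"
    using w unfolding integrable_iff_bounded by (simp add: ennreal_mult_less_top)
  finally show "(\<integral>\<^sup>+ x. ennreal (norm (left_exp_conv w k x)) \<partial>lborel) < \<infinity>" .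
qed

lemma L2_left_exp_conv: "L2 (left_exp_conv w k)"
  unfolding L2_def using borel_measurable_left_exp_conv
    integrable_norm_square_if_bounded[OF integrable_left_exp_conv norm_left_exp_conv_le] by blast

lemma integrable_left_exp_kernel_Icc_pair:
  "integrable (lborel \<Otimes>\<^sub>M lborel) (\<lambda>(x, y).
     if a \<le> x \<and> x \<le> b \<and> y < x then complex_of_real (w y) * exp (\<i> * k * complex_of_real (x - y)) else 0)"
    (is "integrable _ (case_prod ?P)")
proof (rule lborel_pair.Fubini_integrable)
  note borel_measurable_integrable[OF w, measurable]
  have Px: "?P x = (\<lambda>y. indicator {a..b} x *\<^sub>R
      (if y < x then complex_of_real (w y) * exp (\<i> * k * complex_of_real (x - y)) else 0))" for x
    by (auto simp: indicator_def fun_eq_iff)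
  show "case_prod ?P \<in> borel_measurable (lborel \<Otimes>\<^sub>M lborel)"
    by measurable
  show "AE x in lborel. integrable lborel (\<lambda>y. case_prod ?P (x, y))"
    using integrable_left_exp_kernel by (simp add: Px)
  show "integrable lborel (\<lambda>x. \<integral>y. norm (case_prod ?P (x, y)) \<partial>lborel)"
  proof (rule Bochner_Integration.integrable_bound)
    show "integrable lborel (\<lambda>x. indicator {a..b} x * (\<integral>y. \<bar>w y\<bar> \<partial>lborel))"
      using borel_integrable_atLeastAtMost'[of a b "\<lambda>_. \<integral>y. \<bar>w y\<bar> \<partial>lborel"]
      unfolding set_integrable_def by simp
    have "norm (\<integral>y. norm (?P x y) \<partial>lborel) \<le> norm (indicator {a..b} x * (\<integral>y. \<bar>w y\<bar> \<partial>lborel))" for x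
      using integral_norm_left_exp_kernel_le[of x] by (auto simp: Px indicator_def)
    then show "AE x in lborel. norm (\<integral>y. norm (case_prod ?P (x, y)) \<partial>lborel)
        \<le> norm (indicator {a..b} x * (\<integral>y. \<bar>w y\<bar> \<partial>lborel))"
      by simp
  qed measurable
qed

lemma integral_mult_left_exp_kernel_jumps:
  "(\<integral>y. complex_of_real (w y) * ((if y < b then exp (\<i> * k * complex_of_real (b - y)) else 0)
      - (if y < a then exp (\<i> * k * complex_of_real (a - y)) else 0) - (if a \<le> y \<and> y < b then 1 else 0)) \<partial>lborel)
    = left_exp_conv w k b - left_exp_conv w k a - (LINT x:{a..b}|lborel. complex_of_real (w x))"
proof -
  note borel_measurable_integrable[OF w, measurable]
  have "integrable lborel (\<lambda>y. indicator {a..<b} y *\<^sub>R complex_of_real (w y))"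
    using w by (intro integrable_mult_indicator) auto
  moreover have "(\<lambda>y. indicator {a..<b} y *\<^sub>R complex_of_real (w y))
      = (\<lambda>y. if a \<le> y \<and> y < b then complex_of_real (w y) else 0)"
    by (auto simp: fun_eq_iff indicator_def)
  ultimately have "integrable lborel (\<lambda>y. if a \<le> y \<and> y < b then complex_of_real (w y) else 0)"
    by simp
  then have "(\<integral>y. complex_of_real (w y) * ((if y < b then exp (\<i> * k * complex_of_real (b - y)) else 0)
      - (if y < a then exp (\<i> * k * complex_of_real (a - y)) else 0) - (if a \<le> y \<and> y < b then 1 else 0)) \<partial>lborel)
    = left_exp_conv w k b - left_exp_conv w k a
      - (\<integral>y. (if a \<le> y \<and> y < b then complex_of_real (w y) else 0) \<partial>lborel)"
  proof -
    have "(\<lambda>y. complex_of_real (w y) * ((if y < b then exp (\<i> * k * complex_of_real (b - y)) else 0)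
        - (if y < a then exp (\<i> * k * complex_of_real (a - y)) else 0) - (if a \<le> y \<and> y < b then 1 else 0)))
      = (\<lambda>y. (if y < b then complex_of_real (w y) * exp (\<i> * k * complex_of_real (b - y)) else 0)
        - (if y < a then complex_of_real (w y) * exp (\<i> * k * complex_of_real (a - y)) else 0)
        - (if a \<le> y \<and> y < b then complex_of_real (w y) else 0))"
      by (auto simp: fun_eq_iff algebra_simps)
    then show ?thesis
      using integrable_left_exp_kernel \<open>integrable lborel (\<lambda>y. if a \<le> y \<and> y < b then _ else 0)\<close>
      unfolding left_exp_conv_def by (simp add: integral_diff)
  qed
  also have "(\<integral>y. (if a \<le> y \<and> y < b then complex_of_real (w y) else 0) \<partial>lborel)
      = (LINT x:{a..b}|lborel. complex_of_real (w x))"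
    unfolding set_lebesgue_integral_def
  proof (rule integral_cong_AE)
    show "AE x in lborel. (if a \<le> x \<and> x < b then complex_of_real (w x) else 0)
        = indicator {a..b} x *\<^sub>R complex_of_real (w x)"
      using AE_lborel_singleton[of b] by eventually_elim (auto simp: indicator_def)
  qed (measurable, measurable)
  finally show ?thesis .
qed

lemma set_integral_left_exp_conv_Icc:
  assumes ab: "a \<le> b"
  shows "(LINT x:{a..b}|lborel. left_exp_conv w k x) * (\<i> * k)
    = left_exp_conv w k b - left_exp_conv w k a - (LINT x:{a..b}|lborel. complex_of_real (w x))"
proof -
  define P where
    "P x y = (if a \<le> x \<and> x \<le> b \<and> y < x then complex_of_real (w y) * exp (\<i> * k * complex_of_real (x - y)) else 0)"
    for x y
  have "(LINT x:{a..b}|lborel. left_exp_conv w k x) = (\<integral>x. (\<integral>y. P x y \<partial>lborel) \<partial>lborel)"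
    unfolding set_lebesgue_integral_def left_exp_conv_def P_def
    by (intro Bochner_Integration.integral_cong) (auto simp: indicator_def)
  also have "\<dots> = (\<integral>y. (\<integral>x. P x y \<partial>lborel) \<partial>lborel)"
    using integrable_left_exp_kernel_Icc_pair[of a b] unfolding P_def
    by (intro lborel_pair.Fubini_integral[symmetric]) (simp add: case_prod_unfold)
  finally have "(LINT x:{a..b}|lborel. left_exp_conv w k x) * (\<i> * k)
      = (\<integral>y. (\<integral>x. P x y \<partial>lborel) * (\<i> * k) \<partial>lborel)"
    by simp
  also have "\<dots> = (\<integral>y. complex_of_real (w y) * ((if y < b then exp (\<i> * k * complex_of_real (b - y)) else 0)
      - (if y < a then exp (\<i> * k * complex_of_real (a - y)) else 0) - (if a \<le> y \<and> y < b then 1 else 0)) \<partial>lborel)"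
  proof (rule Bochner_Integration.integral_cong[OF refl])
    fix y
    have "(\<lambda>x. P x y) = (\<lambda>x. complex_of_real (w y)
        * (if a \<le> x \<and> x \<le> b \<and> y < x then exp (\<i> * k * complex_of_real (x - y)) else 0))"
      by (auto simp: P_def fun_eq_iff)
    then have "(\<integral>x. P x y \<partial>lborel) * (\<i> * k) = complex_of_real (w y)
        * ((\<integral>x. (if a \<le> x \<and> x \<le> b \<and> y < x then exp (\<i> * k * complex_of_real (x - y)) else 0) \<partial>lborel) * (\<i> * k))"
      by simp
    also have "\<dots> = complex_of_real (w y) * ((if y < b then exp (\<i> * k * complex_of_real (b - y)) else 0)
      - (if y < a then exp (\<i> * k * complex_of_real (a - y)) else 0) - (if a \<le> y \<and> y < b then 1 else 0))"
      using k by (subst integral_left_exp_kernel_Icc[OF _ ab]) auto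
    finally show "(\<integral>x. P x y \<partial>lborel) * (\<i> * k) = complex_of_real (w y) * ((if y < b then exp (\<i> * k * complex_of_real (b - y)) else 0)
      - (if y < a then exp (\<i> * k * complex_of_real (a - y)) else 0) - (if a \<le> y \<and> y < b then 1 else 0))" .
  qed
  also have "\<dots> = left_exp_conv w k b - left_exp_conv w k a - (LINT x:{a..b}|lborel. complex_of_real (w x))"
    by (rule integral_mult_left_exp_kernel_jumps)
  finally show ?thesis .
qed

lemma left_exp_conv_has_integral:
  assumes ab: "a \<le> b"
  shows "((\<lambda>x. \<i> * k * left_exp_conv w k x + complex_of_real (w x))
    has_integral (left_exp_conv w k b - left_exp_conv w k a)) {a..b}"
proof -
  have "set_integrable lborel {a..b} (left_exp_conv w k)"
    using integrable_left_exp_conv unfolding set_integrable_def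
    by (intro integrable_mult_indicator) auto
  from set_borel_integral_eq_integral[OF this]
  have E: "(left_exp_conv w k has_integral (LINT x:{a..b}|lborel. left_exp_conv w k x)) {a..b}"
    by (simp add: integrable_integral)
  have "set_integrable lborel {a..b} (\<lambda>x. complex_of_real (w x))"
    using w unfolding set_integrable_def by (intro integrable_mult_indicator) auto
  from set_borel_integral_eq_integral[OF this]
  have W: "((\<lambda>x. complex_of_real (w x)) has_integral (LINT x:{a..b}|lborel. complex_of_real (w x))) {a..b}"
    by (simp add: integrable_integral)
  have "left_exp_conv w k b - left_exp_conv w k a
      = \<i> * k * (LINT x:{a..b}|lborel. left_exp_conv w k x) + (LINT x:{a..b}|lborel. complex_of_real (w x))"
    using set_integral_left_exp_conv_Icc[OF ab] by (simp add: algebra_simps)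
  then show ?thesis
    using has_integral_add[OF has_integral_mult_right[OF E, of "\<i> * k"] W] by simp
qed

end

definition right_exp_conv :: "(real \<Rightarrow> real) \<Rightarrow> complex \<Rightarrow> real \<Rightarrow> complex" where
  "right_exp_conv w k x =
     (\<integral>y. (if x < y then complex_of_real (w y) * exp (\<i> * k * complex_of_real (y - x)) else 0) \<partial>lborel)"

lemma right_exp_conv_reflect: "right_exp_conv w k x = left_exp_conv (\<lambda>y. w (- y)) k (- x)"
proof -
  have "right_exp_conv w k x = (\<integral>y. (if x < 0 + -1 * y then complex_of_real (w (0 + -1 * y))
      * exp (\<i> * k * complex_of_real ((0 + -1 * y) - x)) else 0) \<partial>lborel)"
    unfolding right_exp_conv_def
    using lborel_integral_real_affine[of "-1" "\<lambda>y. (if x < y then complex_of_real (w y)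
      * exp (\<i> * k * complex_of_real (y - x)) else 0)" 0]
    by simp
  also have "\<dots> = left_exp_conv (\<lambda>y. w (- y)) k (- x)"
  proof -
    have h: "0 + -1 * y - x = - x - y" for y :: real by simp
    show ?thesis unfolding left_exp_conv_def h by (intro Bochner_Integration.integral_cong) auto
  qed
  finally show ?thesis .
qed

lemma integrable_reflect:
  fixes w :: "real \<Rightarrow> 'a::{banach, second_countable_topology}"
  shows "integrable lborel w \<Longrightarrow> integrable lborel (\<lambda>y. w (- y))"
  using lborel_integrable_real_affine[of w "-1" 0] by simp

context
  fixes w :: "real \<Rightarrow> real" and k :: complex
  assumes w: "integrable lborel w" and k: "0 < Im k"
begin

lemma integrable_right_exp_kernel:
  "integrable lborel (\<lambda>y. if x < y then complex_of_real (w y) * exp (\<i> * k * complex_of_real (y - x)) else 0)"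
  by (rule Bochner_Integration.integrable_bound[OF w])
    (use borel_measurable_integrable[OF w, measurable] in measurable,
     intro AE_I2 order_trans[OF norm_exp_kernel_le], use k in auto)

lemma borel_measurable_right_exp_conv: "right_exp_conv w k \<in> borel_measurable lborel"
  unfolding right_exp_conv_reflect[abs_def]
  using borel_measurable_left_exp_conv[OF integrable_reflect[OF w] k] by measurable

lemma integrable_right_exp_conv: "integrable lborel (right_exp_conv w k)"
  unfolding right_exp_conv_reflect[abs_def]
  using lborel_integrable_real_affine[OF integrable_left_exp_conv[OF integrable_reflect[OF w] k], of "-1" 0] by simp

lemma norm_right_exp_conv_le: "cmod (right_exp_conv w k x) \<le> (\<integral>y. \<bar>w (- y)\<bar> \<partial>lborel)"
  unfolding right_exp_conv_reflect by (rule norm_left_exp_conv_le[OF integrable_reflect[OF w] k])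

lemma L2_right_exp_conv: "L2 (right_exp_conv w k)"
  unfolding L2_def using borel_measurable_right_exp_conv
    integrable_norm_square_if_bounded[OF integrable_right_exp_conv norm_right_exp_conv_le] by blast

lemma right_exp_conv_has_integral:
  assumes ab: "a \<le> b"
  shows "((\<lambda>x. - \<i> * k * right_exp_conv w k x - complex_of_real (w x))
    has_integral (right_exp_conv w k b - right_exp_conv w k a)) {a..b}"
proof -
  have "((\<lambda>x. \<i> * k * left_exp_conv (\<lambda>y. w (- y)) k x + complex_of_real (w (- x))) has_integral
      (left_exp_conv (\<lambda>y. w (- y)) k (- a) - left_exp_conv (\<lambda>y. w (- y)) k (- b))) {- b..- a}"
    using ab by (intro left_exp_conv_has_integral[OF integrable_reflect[OF w] k]) simp
  then have "((\<lambda>x. \<i> * k * right_exp_conv w k x + complex_of_real (w x))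
      has_integral (right_exp_conv w k a - right_exp_conv w k b)) {a..b}"
    unfolding right_exp_conv_reflect by (subst has_integral_reflect_real[symmetric]) simp
  from has_integral_neg[OF this]
  have "((\<lambda>x. - (\<i> * k * right_exp_conv w k x + complex_of_real (w x)))
      has_integral (right_exp_conv w k b - right_exp_conv w k a)) {a..b}"
    by simp
  moreover have "(\<lambda>x. - (\<i> * k * right_exp_conv w k x + complex_of_real (w x)))
      = (\<lambda>x. - \<i> * k * right_exp_conv w k x - complex_of_real (w x))"
    by (auto simp: fun_eq_iff)
  ultimately show ?thesis by simp
qed

lemma integrable_mult_left_exp_conv: "integrable lborel (\<lambda>x. complex_of_real (w x) * left_exp_conv w k x)"
  using w borel_measurable_left_exp_conv[OF w k] norm_left_exp_conv_le[OF w k]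
  by (rule integrable_of_real_mult_bounded)

lemma integrable_mult_right_exp_conv: "integrable lborel (\<lambda>x. complex_of_real (w x) * right_exp_conv w k x)"
  using w borel_measurable_right_exp_conv norm_right_exp_conv_le
  by (rule integrable_of_real_mult_bounded)

lemma integral_mult_left_eq_right_exp_conv:
  "(\<integral>x. complex_of_real (w x) * left_exp_conv w k x \<partial>lborel)
    = (\<integral>x. complex_of_real (w x) * right_exp_conv w k x \<partial>lborel)"
proof -
  note borel_measurable_integrable[OF w, measurable]
  define P where "P x y = (if y < x then complex_of_real (w x)
    * (complex_of_real (w y) * exp (\<i> * k * complex_of_real (x - y))) else 0)" for x y
  have Px: "(\<lambda>y. P x y) = (\<lambda>y. complex_of_real (w x)
      * (if y < x then complex_of_real (w y) * exp (\<i> * k * complex_of_real (x - y)) else 0))" for x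
    by (auto simp: P_def fun_eq_iff)
  have Py: "(\<lambda>x. P x y) = (\<lambda>x. complex_of_real (w y)
      * (if y < x then complex_of_real (w x) * exp (\<i> * k * complex_of_real (x - y)) else 0))" for y
    by (auto simp: P_def fun_eq_iff)
  have [measurable]: "case_prod P \<in> borel_measurable (lborel \<Otimes>\<^sub>M lborel)"
    unfolding P_def by measurable
  have "integrable (lborel \<Otimes>\<^sub>M lborel) (case_prod P)"
  proof (rule lborel_pair.Fubini_integrable)
    show "AE x in lborel. integrable lborel (\<lambda>y. case_prod P (x, y))"
      using integrable_left_exp_kernel[OF w k] by (simp add: Px)
    show "integrable lborel (\<lambda>x. \<integral>y. norm (case_prod P (x, y)) \<partial>lborel)"
    proof (rule Bochner_Integration.integrable_bound)
      show "integrable lborel (\<lambda>x. (\<integral>y. \<bar>w y\<bar> \<partial>lborel) * w x)"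
        using w by simp
      have "norm (\<integral>y. norm (P x y) \<partial>lborel) \<le> norm ((\<integral>y. \<bar>w y\<bar> \<partial>lborel) * w x)" for x
        using integral_norm_left_exp_kernel_le[OF w k, of x]
        by (simp add: Px norm_mult abs_mult mult.commute mult_left_mono)
      then show "AE x in lborel. norm (\<integral>y. norm (case_prod P (x, y)) \<partial>lborel)
          \<le> norm ((\<integral>y. \<bar>w y\<bar> \<partial>lborel) * w x)"
        by simp
    qed measurable
  qed measurable
  then have "(\<integral>x. (\<integral>y. P x y \<partial>lborel) \<partial>lborel) = (\<integral>y. (\<integral>x. P x y \<partial>lborel) \<partial>lborel)"
    by (rule lborel_pair.Fubini_integral[symmetric])
  moreover have "(\<integral>y. P x y \<partial>lborel) = complex_of_real (w x) * left_exp_conv w k x" for x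
    unfolding Px left_exp_conv_def by simp
  moreover have "(\<integral>x. P x y \<partial>lborel) = complex_of_real (w y) * right_exp_conv w k y" for y
    unfolding Py right_exp_conv_def by simp
  ultimately show ?thesis by simp
qed

lemma left_plus_right_exp_conv:
  "left_exp_conv w k x + right_exp_conv w k x
    = (\<integral>y. complex_of_real (w y) * exp (\<i> * k * complex_of_real \<bar>x - y\<bar>) \<partial>lborel)"
proof -
  note borel_measurable_integrable[OF w, measurable]
  have "left_exp_conv w k x + right_exp_conv w k x
    = (\<integral>y. (if y < x then complex_of_real (w y) * exp (\<i> * k * complex_of_real (x - y)) else 0)
      + (if x < y then complex_of_real (w y) * exp (\<i> * k * complex_of_real (y - x)) else 0) \<partial>lborel)"
    unfolding left_exp_conv_def right_exp_conv_def
    by (rule Bochner_Integration.integral_add[symmetric]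
        integrable_left_exp_kernel[OF w k] integrable_right_exp_kernel)+
  also have "\<dots> = (\<integral>y. complex_of_real (w y) * exp (\<i> * k * complex_of_real \<bar>x - y\<bar>) \<partial>lborel)"
  proof (rule integral_cong_AE)
    show "AE y in lborel. (if y < x then complex_of_real (w y) * exp (\<i> * k * complex_of_real (x - y)) else 0)
      + (if x < y then complex_of_real (w y) * exp (\<i> * k * complex_of_real (y - x)) else 0)
      = complex_of_real (w y) * exp (\<i> * k * complex_of_real \<bar>x - y\<bar>)"
      using AE_lborel_singleton[of x] by eventually_elim auto
  qed (measurable, measurable)
  finally show ?thesis .
qed

end

section \<open>The eigenvalue problem\<close>

locale dirac_gap_point =
  fixes m :: real and v :: "real \<Rightarrow> real" and \<epsilon> :: real and z :: complex
  assumes v_L1: "integrable lborel v"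
    and v_L2: "integrable lborel (\<lambda>x. (v x)^2)"
    and v_int: "integral\<^sup>L lborel v = 1"
    and eps_pos: "0 < \<epsilon>"
    and z_gap: "z \<in> spec_gap m"
begin

abbreviation "w \<equiv> v_eps v \<epsilon>"

abbreviation "k \<equiv> kk m z"

abbreviation "\<zeta> \<equiv> zeta m z"

lemma v_eps_affine: "w = (\<lambda>x. (1/\<epsilon>) * v (0 + (1/\<epsilon>) * x))"
  by (auto simp: v_eps_def fun_eq_iff)

lemma integrable_v_eps: "integrable lborel w"
proof -
  have "integrable lborel (\<lambda>x. v (0 + (1/\<epsilon>) * x))"
    using lborel_integrable_real_affine[OF v_L1, of "1/\<epsilon>" 0] eps_pos by simp
  then show ?thesis unfolding v_eps_affine by (rule integrable_mult_right)
qed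

lemma borel_measurable_v_eps [measurable]: "w \<in> borel_measurable lborel"
  using integrable_v_eps by auto

lemma L2_v_eps: "L2 (\<lambda>x. complex_of_real (w x))"
proof (rule L2_of_real)
  have "integrable lborel (\<lambda>x. (v (0 + (1/\<epsilon>) * x))^2)"
    using lborel_integrable_real_affine[OF v_L2, of "1/\<epsilon>" 0] eps_pos by simp
  then have "integrable lborel (\<lambda>x. (1/\<epsilon>)^2 * (v (0 + (1/\<epsilon>) * x))^2)"
    by (rule integrable_mult_right)
  moreover have "(\<lambda>x. (w x)^2) = (\<lambda>x. (1/\<epsilon>)^2 * (v (0 + (1/\<epsilon>) * x))^2)"
    unfolding v_eps_affine by (simp add: power_mult_distrib fun_eq_iff power_divide)
  ultimately show "integrable lborel (\<lambda>x. (w x)^2)" by simp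
qed simp

lemma integral_v_eps: "(\<integral>x. w x \<partial>lborel) = 1"
proof -
  have "(\<integral>x. v x \<partial>lborel) = \<bar>1/\<epsilon>\<bar> *\<^sub>R (\<integral>x. v (0 + (1/\<epsilon>) * x) \<partial>lborel)"
    using eps_pos by (intro lborel_integral_real_affine) simp
  also have "\<dots> = (\<integral>x. w x \<partial>lborel)"
    unfolding v_eps_affine using eps_pos by simp
  finally show ?thesis using v_int by simp
qed

lemma Im_k_pos: "0 < Im k"
  using Im_kk_pos[OF z_gap] .

lemma k_nonzero: "k \<noteq> 0"
  using Im_k_pos by auto

lemma zeta_mult_k: "\<zeta> * k = z + complex_of_real m"
  using k_nonzero by (simp add: zeta_def)

lemma zeta_nonzero: "\<zeta> \<noteq> 0"
  using spec_gap_add_nonzero[OF z_gap] k_nonzero by (simp add: zeta_def)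

lemma k_eq: "k = (z - complex_of_real m) * \<zeta>"
proof -
  have "(z - complex_of_real m) * \<zeta> * k = k * k"
    using zeta_mult_k kk_squared[OF z_gap] by (simp add: power2_eq_square algebra_simps)
  then show ?thesis using k_nonzero by simp
qed

text \<open>Splitting the kernel \<open>R\<^sub>z(x, y)\<close> at \<open>y = x\<close>, where \<open>sgn (x - y)\<close> jumps, expresses
  \<open>\<psi>\<^sub>\<tau>\<close> through the two one-sided exponential convolutions of \<open>v\<^sub>\<epsilon>\<close>.\<close>

lemma psi_tau_eq:
  "psi_tau m v \<epsilon> z \<tau> x = (\<i>/2 * left_exp_conv w k x) *s ((ZZ m z + sigma1) *v \<tau>)
    + (\<i>/2 * right_exp_conv w k x) *s ((ZZ m z - sigma1) *v \<tau>)"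
proof -
  define gl where "gl y = (if y < x then complex_of_real (w y) * exp (\<i> * k * complex_of_real (x - y)) else 0)" for y
  define gr where "gr y = (if x < y then complex_of_real (w y) * exp (\<i> * k * complex_of_real (y - x)) else 0)" for y
  define G where "G y = (\<i>/2 * gl y) *s ((ZZ m z + sigma1) *v \<tau>) + (\<i>/2 * gr y) *s ((ZZ m z - sigma1) *v \<tau>)" for y
  have gl: "integrable lborel gl"
    unfolding gl_def by (rule integrable_left_exp_kernel[OF integrable_v_eps Im_k_pos])
  have gr: "integrable lborel gr"
    unfolding gr_def by (rule integrable_right_exp_kernel[OF integrable_v_eps Im_k_pos])
  have [measurable]: "gl \<in> borel_measurable lborel" "gr \<in> borel_measurable lborel"
    using gl gr by auto
  have [measurable]: "G \<in> borel_measurable lborel"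
    unfolding G_def by measurable
  have "w y *\<^sub>R (Rz m z x y *v \<tau>) = G y" if "y \<noteq> x" for y
    using that unfolding G_def gl_def gr_def Rz_def vec2_eq_iff
    by (cases "y < x")
      (simp_all add: matrix_entries_2 scaleR_vec_nth_complex scaleR_conv_of_real[where 'a=complex] algebra_simps)
  then have "psi_tau m v \<epsilon> z \<tau> x = (\<integral>y. (if y = x then w x *\<^sub>R (Rz m z x x *v \<tau>) else G y) \<partial>lborel)"
    unfolding psi_tau_def by (intro Bochner_Integration.integral_cong) auto
  also have "\<dots> = (\<integral>y. G y \<partial>lborel)"
  proof (rule integral_cong_AE)
    show "AE y in lborel. (if y = x then w x *\<^sub>R (Rz m z x x *v \<tau>) else G y) = G y"
      using AE_lborel_singleton[of x] by eventually_elim auto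
  qed (measurable, measurable)
  also have "\<dots> = (\<i>/2 * (\<integral>y. gl y \<partial>lborel)) *s ((ZZ m z + sigma1) *v \<tau>)
      + (\<i>/2 * (\<integral>y. gr y \<partial>lborel)) *s ((ZZ m z - sigma1) *v \<tau>)"
    unfolding G_def using gl gr
    by (simp add: integrable_bounded_linear[OF bounded_linear_vector_smult_left]
        integral_bounded_linear[OF bounded_linear_vector_smult_left])
  finally show ?thesis
    by (simp add: left_exp_conv_def right_exp_conv_def gl_def[abs_def] gr_def[abs_def])
qed

definition phi_tau :: "complex ^ 2 \<Rightarrow> real \<Rightarrow> complex ^ 2" where
  "phi_tau \<tau> x = (\<i>/2 * (\<i> * k * left_exp_conv w k x + complex_of_real (w x))) *s ((ZZ m z + sigma1) *v \<tau>)
    + (\<i>/2 * (- \<i> * k * right_exp_conv w k x - complex_of_real (w x))) *s ((ZZ m z - sigma1) *v \<tau>)"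

lemma is_weak_deriv_psi_tau: "is_weak_deriv (psi_tau m v \<epsilon> z \<tau>) (phi_tau \<tau>)"
  unfolding is_weak_deriv_def
proof (intro allI impI)
  fix a b :: real assume ab: "a \<le> b"
  have "(phi_tau \<tau> has_integral (\<i>/2 * (left_exp_conv w k b - left_exp_conv w k a)) *s ((ZZ m z + sigma1) *v \<tau>)
      + (\<i>/2 * (right_exp_conv w k b - right_exp_conv w k a)) *s ((ZZ m z - sigma1) *v \<tau>)) {a..b}"
    unfolding phi_tau_def
    by (intro has_integral_add has_integral_vector_smult_left has_integral_mult_right
        left_exp_conv_has_integral[OF integrable_v_eps Im_k_pos ab]
        right_exp_conv_has_integral[OF integrable_v_eps Im_k_pos ab])
  then show "(phi_tau \<tau> has_integral psi_tau m v \<epsilon> z \<tau> b - psi_tau m v \<epsilon> z \<tau> a) {a..b}"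
    by (simp add: psi_tau_eq vec2_eq_iff algebra_simps)
qed

lemma L2_psi_tau: "L2 (psi_tau m v \<epsilon> z \<tau>)"
  unfolding psi_tau_eq[abs_def]
  by (intro L2_add L2_vector_smult L2_mult_left L2_left_exp_conv L2_right_exp_conv integrable_v_eps Im_k_pos)

lemma L2_phi_tau: "L2 (phi_tau \<tau>)"
  unfolding phi_tau_def[abs_def]
  by (intro L2_add L2_diff L2_vector_smult L2_mult_left L2_left_exp_conv L2_right_exp_conv L2_v_eps
      integrable_v_eps Im_k_pos)

lemma free_dirac_psi_tau:
  "(- \<i>) *s (sigma1 *v phi_tau \<tau> x) + complex_of_real m *s (sigma3 *v psi_tau m v \<epsilon> z \<tau> x)
    = z *s psi_tau m v \<epsilon> z \<tau> x + w x *\<^sub>R \<tau>"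
proof -
  define E1 where "E1 = left_exp_conv w k x"
  define E2 where "E2 = right_exp_conv w k x"
  define W where "W = complex_of_real (w x)"
  note identities = dirac_kernel_identities[OF zeta_mult_k k_eq zeta_nonzero, of E1 W "\<tau>$1" "\<tau>$2" E2]
  have psi: "psi_tau m v \<epsilon> z \<tau> x $ 1 = \<i>/2 * E1 * (\<zeta> * \<tau>$1 + \<tau>$2) + \<i>/2 * E2 * (\<zeta> * \<tau>$1 - \<tau>$2)"
    "psi_tau m v \<epsilon> z \<tau> x $ 2 = \<i>/2 * E1 * (\<tau>$1 + inverse \<zeta> * \<tau>$2) + \<i>/2 * E2 * (- \<tau>$1 + inverse \<zeta> * \<tau>$2)"
    unfolding psi_tau_eq E1_def E2_def by (simp_all add: matrix_entries_2)
  have phi: "phi_tau \<tau> x $ 1 = \<i>/2 * (\<i>*k*E1 + W) * (\<zeta> * \<tau>$1 + \<tau>$2) + \<i>/2 * (-\<i>*k*E2 - W) * (\<zeta> * \<tau>$1 - \<tau>$2)"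
    "phi_tau \<tau> x $ 2 = \<i>/2 * (\<i>*k*E1 + W) * (\<tau>$1 + inverse \<zeta> * \<tau>$2)
      + \<i>/2 * (-\<i>*k*E2 - W) * (- \<tau>$1 + inverse \<zeta> * \<tau>$2)"
    unfolding phi_tau_def E1_def E2_def W_def by (simp_all add: matrix_entries_2)
  let ?lhs = "(- \<i>) *s (sigma1 *v phi_tau \<tau> x) + complex_of_real m *s (sigma3 *v psi_tau m v \<epsilon> z \<tau> x)"
  let ?rhs = "z *s psi_tau m v \<epsilon> z \<tau> x + w x *\<^sub>R \<tau>"
  have "?lhs $ 1 = - \<i> * phi_tau \<tau> x $ 2 + complex_of_real m * psi_tau m v \<epsilon> z \<tau> x $ 1"
    by (simp add: matrix_entries_2)
  also have "\<dots> = ?rhs $ 1"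
    using identities(1) by (simp add: phi(2) psi(1) scaleR_vec_nth_complex scaleR_conv_of_real[where 'a=complex] W_def)
  finally have "?lhs $ 1 = ?rhs $ 1" .
  moreover have "?lhs $ 2 = - \<i> * phi_tau \<tau> x $ 1 - complex_of_real m * psi_tau m v \<epsilon> z \<tau> x $ 2"
    by (simp add: matrix_entries_2)
  moreover have "\<dots> = ?rhs $ 2"
    using identities(2) by (simp add: phi(1) psi(2) scaleR_vec_nth_complex scaleR_conv_of_real[where 'a=complex] W_def)
  ultimately show ?thesis
    unfolding vec2_eq_iff by simp
qed

lemma integral_v_eps_exp_abs:
  "(\<integral>y. complex_of_real (w y) * exp (\<i> * k * complex_of_real \<bar>\<epsilon> * s - y\<bar>) \<partial>lborel)
   = (\<integral>t. complex_of_real (v t) * exp (\<i> * (complex_of_real \<epsilon> * k) * complex_of_real \<bar>s - t\<bar>) \<partial>lborel)"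
proof -
  have e0: "\<epsilon> \<noteq> 0" using eps_pos by simp
  have "(\<integral>y. complex_of_real (w y) * exp (\<i> * k * complex_of_real \<bar>\<epsilon> * s - y\<bar>) \<partial>lborel)
     = \<bar>\<epsilon>\<bar> *\<^sub>R (\<integral>t. complex_of_real (w (0 + \<epsilon> * t))
        * exp (\<i> * k * complex_of_real \<bar>\<epsilon> * s - (0 + \<epsilon> * t)\<bar>) \<partial>lborel)"
    by (rule lborel_integral_real_affine[OF e0])
  also have "\<dots> = (\<integral>t. \<epsilon> *\<^sub>R (complex_of_real (w (0 + \<epsilon> * t))
      * exp (\<i> * k * complex_of_real \<bar>\<epsilon> * s - (0 + \<epsilon> * t)\<bar>)) \<partial>lborel)"
    using eps_pos by simp
  also have "\<dots> = (\<integral>t. complex_of_real (v t) * exp (\<i> * (complex_of_real \<epsilon> * k) * complex_of_real \<bar>s - t\<bar>) \<partial>lborel)"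
  proof (rule Bochner_Integration.integral_cong[OF refl])
    fix t
    have a: "\<bar>\<epsilon> * s - (0 + \<epsilon> * t)\<bar> = \<epsilon> * \<bar>s - t\<bar>"
      using eps_pos by (simp add: right_diff_distrib[symmetric] abs_mult)
    have b: "w (0 + \<epsilon> * t) = v t / \<epsilon>" using e0 by (simp add: v_eps_def)
    show "\<epsilon> *\<^sub>R (complex_of_real (w (0 + \<epsilon> * t)) * exp (\<i> * k * complex_of_real \<bar>\<epsilon> * s - (0 + \<epsilon> * t)\<bar>))
      = complex_of_real (v t) * exp (\<i> * (complex_of_real \<epsilon> * k) * complex_of_real \<bar>s - t\<bar>)"
      unfolding a b using e0 by (simp add: scaleR_conv_of_real mult_ac)
  qed
  finally show ?thesis .
qed

lemma alpha1_v_eps: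
  "(\<integral>x. complex_of_real (w x) * (\<integral>y. complex_of_real (w y) * exp (\<i> * k * complex_of_real \<bar>x - y\<bar>) \<partial>lborel) \<partial>lborel)
    = alpha1 v (complex_of_real \<epsilon> * k)"
  (is "(\<integral>x. complex_of_real (w x) * ?H x \<partial>lborel) = _")
proof -
  have e0: "\<epsilon> \<noteq> 0" using eps_pos by simp
  have "(\<integral>x. complex_of_real (w x) * ?H x \<partial>lborel)
      = \<bar>\<epsilon>\<bar> *\<^sub>R (\<integral>s. complex_of_real (w (0 + \<epsilon> * s)) * ?H (0 + \<epsilon> * s) \<partial>lborel)"
    by (rule lborel_integral_real_affine[OF e0])
  also have "\<dots> = (\<integral>s. \<epsilon> *\<^sub>R (complex_of_real (w (0 + \<epsilon> * s)) * ?H (0 + \<epsilon> * s)) \<partial>lborel)"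
    using eps_pos by simp
  also have "\<dots> = alpha1 v (complex_of_real \<epsilon> * k)"
    unfolding alpha1_def
  proof (rule Bochner_Integration.integral_cong[OF refl])
    fix s
    have "w (0 + \<epsilon> * s) = v s / \<epsilon>" using e0 by (simp add: v_eps_def)
    then have "\<epsilon> *\<^sub>R (complex_of_real (w (0 + \<epsilon> * s)) * ?H (0 + \<epsilon> * s))
        = complex_of_real (v s) * (\<integral>t. complex_of_real (v t)
          * exp (\<i> * (complex_of_real \<epsilon> * k) * complex_of_real \<bar>s - t\<bar>) \<partial>lborel)"
      using e0 by (simp add: scaleR_conv_of_real integral_v_eps_exp_abs)
    also have "\<dots> = (\<integral>t. complex_of_real (v s) * (complex_of_real (v t)
        * exp (\<i> * (complex_of_real \<epsilon> * k) * complex_of_real \<bar>s - t\<bar>)) \<partial>lborel)"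
      by (rule integral_mult_right_zero[symmetric])
    also have "\<dots> = (\<integral>t. complex_of_real (v s) * exp (\<i> * (complex_of_real \<epsilon> * k) * complex_of_real \<bar>s - t\<bar>)
        * complex_of_real (v t) \<partial>lborel)"
      by (rule Bochner_Integration.integral_cong) (simp_all add: mult_ac)
    finally show "\<epsilon> *\<^sub>R (complex_of_real (w (0 + \<epsilon> * s)) * ?H (0 + \<epsilon> * s))
        = (\<integral>t. complex_of_real (v s) * exp (\<i> * (complex_of_real \<epsilon> * k) * complex_of_real \<bar>s - t\<bar>)
          * complex_of_real (v t) \<partial>lborel)" .
  qed
  finally show ?thesis .
qed

lemma integral_v_eps_left_exp_conv:
  "2 * (\<integral>x. complex_of_real (w x) * left_exp_conv w k x \<partial>lborel) = alpha1 v (complex_of_real \<epsilon> * k)"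
proof -
  note w = integrable_v_eps and k = Im_k_pos
  have "2 * (\<integral>x. complex_of_real (w x) * left_exp_conv w k x \<partial>lborel)
      = (\<integral>x. complex_of_real (w x) * left_exp_conv w k x \<partial>lborel)
        + (\<integral>x. complex_of_real (w x) * right_exp_conv w k x \<partial>lborel)"
    by (simp add: integral_mult_left_eq_right_exp_conv[OF w k])
  also have "\<dots> = (\<integral>x. complex_of_real (w x) * (left_exp_conv w k x + right_exp_conv w k x) \<partial>lborel)"
    using integrable_mult_left_exp_conv[OF w k] integrable_mult_right_exp_conv[OF w k]
    by (simp add: distrib_left)
  also have "\<dots> = alpha1 v (complex_of_real \<epsilon> * k)"
    unfolding left_plus_right_exp_conv[OF w k] by (rule alpha1_v_eps)
  finally show ?thesis .
qed

lemma integral_v_eps_psi_tau: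
  "(\<integral>y. w y *\<^sub>R psi_tau m v \<epsilon> z \<tau> y \<partial>lborel) = (\<i>/2 * alpha1 v (complex_of_real \<epsilon> * k)) *s (ZZ m z *v \<tau>)"
proof -
  note w = integrable_v_eps and k = Im_k_pos
  define I where "I = (\<integral>x. complex_of_real (w x) * left_exp_conv w k x \<partial>lborel)"
  have "w y *\<^sub>R psi_tau m v \<epsilon> z \<tau> y
      = (\<i>/2 * (complex_of_real (w y) * left_exp_conv w k y)) *s ((ZZ m z + sigma1) *v \<tau>)
        + (\<i>/2 * (complex_of_real (w y) * right_exp_conv w k y)) *s ((ZZ m z - sigma1) *v \<tau>)" for y
    unfolding psi_tau_eq
    by (simp add: vec2_eq_iff scaleR_vec_nth_complex scaleR_conv_of_real[where 'a=complex] algebra_simps)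
  then have "(\<integral>y. w y *\<^sub>R psi_tau m v \<epsilon> z \<tau> y \<partial>lborel)
      = (\<i>/2 * I) *s ((ZZ m z + sigma1) *v \<tau>) + (\<i>/2 * I) *s ((ZZ m z - sigma1) *v \<tau>)"
    using integrable_mult_left_exp_conv[OF w k] integrable_mult_right_exp_conv[OF w k]
    by (simp add: I_def integral_mult_left_eq_right_exp_conv[OF w k]
        integrable_bounded_linear[OF bounded_linear_vector_smult_left]
        integral_bounded_linear[OF bounded_linear_vector_smult_left])
  also have "\<dots> = (\<i>/2 * (2 * I)) *s (ZZ m z *v \<tau>)"
    by (simp add: vec2_eq_iff matrix_entries_2 algebra_simps)
  finally show ?thesis
    unfolding I_def integral_v_eps_left_exp_conv .
qed

lemma Mmat_mult:
  "Mmat m A v \<epsilon> z *v \<tau> = \<tau> + A *v ((\<i>/2 * alpha1 v (complex_of_real \<epsilon> * k)) *s (ZZ m z *v \<tau>))"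
  unfolding Mmat_def by (simp add: vec2_eq_iff matrix_entries_2 algebra_simps)

lemma D_action_psi_tau:
  "D_action m A v \<epsilon> (psi_tau m v \<epsilon> z \<tau>) (phi_tau \<tau>) x
     = z *s psi_tau m v \<epsilon> z \<tau> x + w x *\<^sub>R (Mmat m A v \<epsilon> z *v \<tau>)"
  unfolding D_action_def integral_v_eps_psi_tau free_dirac_psi_tau Mmat_mult
  by (simp add: algebra_simps scaleR_right_distrib)

lemma psi_tau_eq_0D:
  assumes psi0: "psi_tau m v \<epsilon> z \<tau> = (\<lambda>x. 0)"
  shows "\<tau> = 0"
proof -
  have "(- \<i>) *s (sigma1 *v phi_tau \<tau> x) + complex_of_real m *s (sigma3 *v 0) = z *s 0 + w x *\<^sub>R \<tau>" for x
    using free_dirac_psi_tau[of \<tau> x] psi0 by simp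
  then have "- \<i> * phi_tau \<tau> x $ 2 = complex_of_real (w x) * \<tau>$1"
    "- \<i> * phi_tau \<tau> x $ 1 = complex_of_real (w x) * \<tau>$2" for x
    unfolding vec2_eq_iff
    by (auto simp: matrix_entries_2 scaleR_vec_nth_complex scaleR_conv_of_real[where 'a=complex])
  then have "\<i> * (- \<i> * phi_tau \<tau> x $ 2) = \<i> * (complex_of_real (w x) * \<tau>$1)"
    "\<i> * (- \<i> * phi_tau \<tau> x $ 1) = \<i> * (complex_of_real (w x) * \<tau>$2)" for x
    by simp_all
  then have phi: "phi_tau \<tau> x $ 2 = \<i> * \<tau>$1 * complex_of_real (w x)"
    "phi_tau \<tau> x $ 1 = \<i> * \<tau>$2 * complex_of_real (w x)" for x
    by (simp_all add: mult_ac)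
  have intervals: "((\<lambda>x. phi_tau \<tau> x $ j) has_integral 0) {a..b}" if "a \<le> b" for a b j
  proof -
    have "(phi_tau \<tau> has_integral 0) {a..b}"
      using is_weak_deriv_psi_tau[of \<tau>] that psi0 unfolding is_weak_deriv_def by fastforce
    from has_integral_linear[OF this bounded_linear_vec_nth[of j]]
    show ?thesis by (simp add: o_def)
  qed
  have whole_line: "((\<lambda>x. c * complex_of_real (w x)) has_integral c) UNIV" for c
  proof -
    have "(w has_integral 1) UNIV"
      using has_integral_integral_real[OF integrable_v_eps] integral_v_eps by simp
    from has_integral_mult_right[OF has_integral_of_real[OF this], of c] show ?thesis by simp
  qed
  have "\<i> * \<tau>$1 = 0"
    using whole_line intervals[of _ _ 2] unfolding phi by (rule has_integral_UNIV_eq_0_if_intervals)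
  moreover have "\<i> * \<tau>$2 = 0"
    using whole_line intervals[of _ _ 1] unfolding phi by (rule has_integral_UNIV_eq_0_if_intervals)
  ultimately show "\<tau> = 0" by (simp add: vec2_eq_iff)
qed

lemma free_dirac_combination_derivative:
  fixes p q :: "complex ^ 2"
  assumes "p $ 2 = \<i> * ((z - complex_of_real m) * q $ 1)" and "p $ 1 = \<i> * ((z + complex_of_real m) * q $ 2)"
    and c: "c * c = 1"
  shows "k * p $ 1 + c * (z + complex_of_real m) * p $ 2
    = c * \<i> * k * (k * q $ 1 + c * (z + complex_of_real m) * q $ 2)"
proof -
  let ?zm = "z + complex_of_real m"
  have kk: "k * k = (z - complex_of_real m) * ?zm"
    using kk_squared[OF z_gap] by (simp add: power2_eq_square algebra_simps)
  have "k * p $ 1 + c * ?zm * p $ 2 = k * (\<i> * (?zm * q $ 2)) + c * ?zm * (\<i> * ((z - complex_of_real m) * q $ 1))"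
    using assms(1,2) by simp
  also have "\<dots> = \<i> * (k * ?zm * q $ 2 + c * ((z - complex_of_real m) * ?zm) * q $ 1)"
    by (simp add: algebra_simps)
  also have "\<dots> = \<i> * (c * c * (k * ?zm * q $ 2) + c * (k * k) * q $ 1)"
    by (simp add: c kk)
  also have "\<dots> = c * \<i> * k * (k * q $ 1 + c * ?zm * q $ 2)"
    by (simp add: algebra_simps)
  finally show ?thesis .
qed

lemma free_dirac_combination_eq_0:
  assumes u: "L2 u" and u': "is_weak_deriv u u'"
    and comp: "AE x in lborel. u' x $ 2 = \<i> * ((z - complex_of_real m) * u x $ 1)
      \<and> u' x $ 1 = \<i> * ((z + complex_of_real m) * u x $ 2)"
    and c: "c * c = 1"
  shows "k * u y $ 1 + c * (z + complex_of_real m) * u y $ 2 = 0"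
proof (rule square_integrable_weak_exp_solution_eq_0[where l="c * \<i> * k"])
  let ?zm = "z + complex_of_real m"
  show "Re (c * \<i> * k) \<noteq> 0"
    using c Im_k_pos by (auto simp: square_eq_1_iff)
  show "integrable lborel (\<lambda>x. (cmod (k * u x $ 1 + c * ?zm * u x $ 2))^2)"
    by (rule square_integrable_linear_combination[OF u])
  fix a b :: real assume ab: "a \<le> b"
  have "(u' has_integral (u b - u a)) {a..b}" using u' ab unfolding is_weak_deriv_def by blast
  from has_integral_linear[OF this bounded_linear_vec_nth[of 1]] has_integral_linear[OF this bounded_linear_vec_nth[of 2]]
  have derivative: "((\<lambda>x. k * u' x $ 1 + c * ?zm * u' x $ 2)
      has_integral (k * (u b $ 1 - u a $ 1) + c * ?zm * (u b $ 2 - u a $ 2))) {a..b}"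
    by (intro has_integral_add has_integral_mult_right) (simp_all add: o_def)
  have "AE x in lborel. x \<in> {a..b} \<longrightarrow>
      k * u' x $ 1 + c * ?zm * u' x $ 2 = c * \<i> * k * (k * u x $ 1 + c * ?zm * u x $ 2)"
    using comp by eventually_elim (intro impI free_dirac_combination_derivative c, simp_all)
  from has_integral_AE[OF this, THEN iffD1, OF derivative]
  show "((\<lambda>x. c * \<i> * k * (k * u x $ 1 + c * ?zm * u x $ 2))
      has_integral (k * u b $ 1 + c * ?zm * u b $ 2) - (k * u a $ 1 + c * ?zm * u a $ 2)) {a..b}"
    by (simp add: algebra_simps)
qed

lemma free_dirac_L2_solution_eq_0:
  assumes u: "L2 u" and u': "is_weak_deriv u u'"
    and eq: "AE x in lborel. (- \<i>) *s (sigma1 *v u' x) + complex_of_real m *s (sigma3 *v u x) = z *s u x"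
  shows "u x = 0"
proof -
  let ?zm = "z + complex_of_real m"
  have "AE x in lborel. u' x $ 2 = \<i> * ((z - complex_of_real m) * u x $ 1) \<and> u' x $ 1 = \<i> * (?zm * u x $ 2)"
    using eq by eventually_elim (intro conjI free_dirac_components)
  then have "k * u x $ 1 + 1 * ?zm * u x $ 2 = 0" "k * u x $ 1 + (- 1) * ?zm * u x $ 2 = 0"
    by (rule free_dirac_combination_eq_0[OF u u'], simp)+
  then have "k * (2 * u x $ 1) = 0" "?zm * (2 * u x $ 2) = 0"
    by algebra+
  then show "u x = 0"
    using k_nonzero spec_gap_add_nonzero[OF z_gap] by (simp add: vec2_eq_iff)
qed

lemma eigenspace_imp_psi_tau:
  assumes "psi \<in> eigenspace m A v \<epsilon> z"
  shows "\<exists>\<tau>. Mmat m A v \<epsilon> z *v \<tau> = 0 \<and> psi = psi_tau m v \<epsilon> z \<tau>"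
proof -
  from assms obtain phi where psi: "L2 psi" and phi: "is_weak_deriv psi phi"
    and eq: "AE x in lborel. D_action m A v \<epsilon> psi phi x = z *s psi x"
    unfolding eigenspace_def H1_def by blast
  define c where "c = (\<integral>y. w y *\<^sub>R psi y \<partial>lborel)"
  define \<tau> where "\<tau> = - (A *v c)"
  have "psi x - psi_tau m v \<epsilon> z \<tau> x = 0" for x
  proof (rule free_dirac_L2_solution_eq_0)
    show "L2 (\<lambda>x. psi x - psi_tau m v \<epsilon> z \<tau> x)"
      by (rule L2_diff[OF psi L2_psi_tau])
    show "is_weak_deriv (\<lambda>x. psi x - psi_tau m v \<epsilon> z \<tau> x) (\<lambda>x. phi x - phi_tau \<tau> x)"
      by (rule is_weak_deriv_diff[OF phi is_weak_deriv_psi_tau])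
    show "AE x in lborel. (- \<i>) *s (sigma1 *v (phi x - phi_tau \<tau> x))
        + complex_of_real m *s (sigma3 *v (psi x - psi_tau m v \<epsilon> z \<tau> x)) = z *s (psi x - psi_tau m v \<epsilon> z \<tau> x)"
      using eq
    proof eventually_elim
      case (elim x)
      then have "(- \<i>) *s (sigma1 *v phi x) + complex_of_real m *s (sigma3 *v psi x) = z *s psi x + w x *\<^sub>R \<tau>"
        unfolding D_action_def c_def[symmetric] \<tau>_def by (simp add: algebra_simps)
      then show ?case
        using free_dirac_psi_tau[of \<tau> x]
        by (simp add: matrix_vector_mult_diff_distrib vector_ssub_ldistrib algebra_simps)
    qed
  qed
  then have psi_eq: "psi = psi_tau m v \<epsilon> z \<tau>" by (auto simp: fun_eq_iff)
  then have "c = (\<i>/2 * alpha1 v (complex_of_real \<epsilon> * k)) *s (ZZ m z *v \<tau>)"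
    unfolding c_def by (simp add: integral_v_eps_psi_tau)
  then have "Mmat m A v \<epsilon> z *v \<tau> = 0"
    unfolding Mmat_mult by (simp add: \<tau>_def)
  with psi_eq show ?thesis by blast
qed

lemma psi_tau_in_eigenspace:
  "Mmat m A v \<epsilon> z *v \<tau> = 0 \<Longrightarrow> psi_tau m v \<epsilon> z \<tau> \<in> eigenspace m A v \<epsilon> z"
  unfolding eigenspace_def H1_def
  using L2_psi_tau L2_phi_tau is_weak_deriv_psi_tau by (auto simp: D_action_psi_tau intro!: exI[of _ "phi_tau \<tau>"])

lemma eigenspace_eq_image: "eigenspace m A v \<epsilon> z = psi_tau m v \<epsilon> z ` {\<tau>. Mmat m A v \<epsilon> z *v \<tau> = 0}"
  by (auto dest: eigenspace_imp_psi_tau intro: psi_tau_in_eigenspace)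

lemma psi_tau_add: "psi_tau m v \<epsilon> z (\<tau> + \<sigma>) = psi_tau m v \<epsilon> z \<tau> + psi_tau m v \<epsilon> z \<sigma>"
  by (simp add: fun_eq_iff psi_tau_eq vec2_eq_iff matrix_entries_2 algebra_simps)

lemma psi_tau_scale: "psi_tau m v \<epsilon> z (c *s \<tau>) = fscale c (psi_tau m v \<epsilon> z \<tau>)"
  by (simp add: fun_eq_iff fscale_def psi_tau_eq vec2_eq_iff matrix_entries_2 algebra_simps)

lemma linear_psi_tau: "Vector_Spaces.linear (*s) fscale (psi_tau m v \<epsilon> z)"
  unfolding Vector_Spaces.linear_iff
  using vec.vector_space_axioms fscale_vector_space psi_tau_add psi_tau_scale by blast

lemma inj_psi_tau: "inj (psi_tau m v \<epsilon> z)"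
proof (rule injI)
  fix \<tau> \<sigma> assume "psi_tau m v \<epsilon> z \<tau> = psi_tau m v \<epsilon> z \<sigma>"
  then have "psi_tau m v \<epsilon> z (\<tau> - \<sigma>) = (\<lambda>x. 0)"
    by (simp add: fun_eq_iff psi_tau_eq vec2_eq_iff matrix_entries_2 algebra_simps)
  then show "\<tau> = \<sigma>" using psi_tau_eq_0D by fastforce
qed

lemma is_eigenfunction_iff:
  "is_eigenfunction m A v \<epsilon> z psi
    \<longleftrightarrow> (\<exists>\<tau>. Mmat m A v \<epsilon> z *v \<tau> = 0 \<and> \<tau> \<noteq> 0 \<and> psi = psi_tau m v \<epsilon> z \<tau>)"
proof -
  have "psi_tau m v \<epsilon> z 0 = (\<lambda>x. 0)"
    by (simp add: fun_eq_iff psi_tau_eq)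
  then have "psi_tau m v \<epsilon> z \<tau> = (\<lambda>x. 0) \<longleftrightarrow> \<tau> = 0" for \<tau>
    using psi_tau_eq_0D[of \<tau>] by auto
  then show ?thesis
    unfolding is_eigenfunction_def eigenspace_eq_image by auto
qed

lemma geom_mult_eq_dim_kernel: "geom_mult m A v \<epsilon> z = vec.dim {\<tau>. Mmat m A v \<epsilon> z *v \<tau> = 0}"
  unfolding geom_mult_def eigenspace_eq_image by (rule dim_fscale_image_eq[OF linear_psi_tau inj_psi_tau])

end

theorem proposition4p6:
  fixes m :: real and A :: "complex ^ 2 ^ 2" and v :: "real \<Rightarrow> real"
    and \<epsilon> :: real and z :: complex
  assumes v_meas: "v \<in> borel_measurable lborel"
    and v_L1: "integrable lborel v"
    and v_L2: "integrable lborel (\<lambda>x. (v x)^2)"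
    and v_int: "integral\<^sup>L lborel v = 1"
    and eps_pos: "\<epsilon> > 0"
    and z_in: "z \<in> spec_gap m"
  shows "(is_eigenvalue m A v \<epsilon> z \<longleftrightarrow> det (Mmat m A v \<epsilon> z) = 0)
    \<and> (is_eigenvalue m A v \<epsilon> z \<longrightarrow>
         geom_mult m A v \<epsilon> z = vec.dim {\<tau>. Mmat m A v \<epsilon> z *v \<tau> = 0}
       \<and> vec.dim {\<tau>. Mmat m A v \<epsilon> z *v \<tau> = 0} \<le> 2
       \<and> {psi. is_eigenfunction m A v \<epsilon> z psi}
           = {psi_tau m v \<epsilon> z \<tau> | \<tau>. Mmat m A v \<epsilon> z *v \<tau> = 0 \<and> \<tau> \<noteq> 0})"
proof -
  interpret dirac_gap_point m v \<epsilon> z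
    using v_L1 v_L2 v_int eps_pos z_in by unfold_locales
  have "is_eigenvalue m A v \<epsilon> z \<longleftrightarrow> det (Mmat m A v \<epsilon> z) = 0"
    unfolding is_eigenvalue_def is_eigenfunction_iff det_eq_0_iff_kernel by auto
  moreover have "vec.dim {\<tau>. Mmat m A v \<epsilon> z *v \<tau> = 0} \<le> 2"
    using dim_subset_UNIV_cart_gen[of "{\<tau>. Mmat m A v \<epsilon> z *v \<tau> = 0}"] by simp
  moreover have "{psi. is_eigenfunction m A v \<epsilon> z psi}
      = {psi_tau m v \<epsilon> z \<tau> | \<tau>. Mmat m A v \<epsilon> z *v \<tau> = 0 \<and> \<tau> \<noteq> 0}"
    unfolding is_eigenfunction_iff by auto
  ultimately show ?thesis
    using geom_mult_eq_dim_kernel by simp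
qed

end
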